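(* In the left-censored disclosure game described in the context, let $N(e)=\max_{0\le k\le L(e)}D(e|_k)$, $\alpha=\frac{1-\sqrt{1-4pq}}{2}$, $$V(e)=\frac{1}{1+\frac{1-\pi_0}{\pi_0}\frac{p-\alpha}{q-\alpha}\left(\frac{q}{p}\right)^{N(e)+1}},\qquad n^\star=\log_{p/q}\!\left(\frac{p-\alpha}{q-\alpha}\right)-1 .$$ Then $n^\star>0$, and in any equilibrium $(\sigma^\star,\mathbf{a}^\star,\mu)$, for all $e\in E$: (1) $\mathbf{a}^\star(e)=\mu(e)=\min\{V(e),\nu(e)\}$; (2) $\sigma^\star(e|e)=1$ if and only if $D(e)\ge N(e)-n^\star$; (3) if $\sigma^\star(m|e)>0$, then $L(m)\ge\max\big(\arg\max_{0\le k\le L(e)}D(e|_k)\big)$.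
   Context: Left-censored disclosure game. A state $\omega\in\{G,B\}$ has prior probability $\pi_0\in(0,1)$ on $G$. The evidence space $E=\bigcup_{t\ge0}\{g,b\}^t$ is the set of finite sequences of signals in $\{g,b\}$, including the empty sequence $\emptyset$. For $e\in E$: $L(e)$ is its length, $G(e)$ and $B(e)$ the numbers of $g$'s and $b$'s, $D(e)=G(e)-B(e)$; for $e=(s_1,\dots,s_L)$ and $0<k\le L$, $e|_k=(s_{L-k+1},\dots,s_L)$, and $e|_0=\emptyset$. Parameters satisfy $1>p>q>0$ and $p+q<1$; evidence is drawn from $F_\omega$ with $F_G(e)=(1-p-q)p^{G(e)}q^{B(e)}$, $F_B(e)=(1-p-q)p^{B(e)}q^{G(e)}$. The disclosure rule: $e_1\precsim e_2$ iff $L(e_1)\le L(e_2)$ and $e_1=e_2|_{L(e_1)}$; a sender with evidence $e$ sends a message $m\precsim e$. The receiver takes action $a\in\mathbb{R}$ with payoff $-(a-\mathbf{1}\{\omega=G\})^2$ (so his optimal action equals his posterior belief on $G$); the sender's payoff is $a$. Let $UC(m)=\{e:m\precsim e\}$ and $\nu(e)=\frac{F_G(e)\pi_0}{F_G(e)\pi_0+F_B(e)(1-\pi_0)}$. A (truth-leaning) equilibrium is a triple $(\sigma^\star,\mathbf{a}^\star,\mu)$ with $\sigma^\star:E\to\Delta(E)$, $\mathrm{supp}\,\sigma^\star(\cdot|e)\subset\{m:m\precsim e\}$, $\mathbf{a}^\star:E\to\mathbb{R}$, $\mu:E\to[0,1]$, such that: (i) $\mathrm{supp}\,\sigma^\star(\cdot|e)\subset\arg\max_{m\precsim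 e}\mathbf{a}^\star(m)$ for all $e$; (ii) $\mathbf{a}^\star=\mu$; (iii) for every on-path message $m$ (i.e. $m\in\mathrm{supp}\,\sigma^\star(\cdot|e)$ for some $e$), $\mu(m)=\frac{\sum_{e\in UC(m)}\sigma^\star(m|e)F_G(e)\pi_0}{\sum_{e\in UC(m)}\sigma^\star(m|e)[F_G(e)\pi_0+F_B(e)(1-\pi_0)]}$; (iv) if $e\in\arg\max_{m\precsim e}\mathbf{a}^\star(m)$ then $\sigma^\star(e|e)=1$; (v) for every off-path $m$, $\mu(m)=\nu(m)$. *)

theory Defs
  imports "HOL-Probability.Probability_Mass_Function"
begin

datatype signal = sg | sb

type_synonym evidence = "signal list"

definition Gc :: "evidence \<Rightarrow> nat" where
  "Gc e = length (filter (\<lambda>s. s = sg) e)"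

definition Bc :: "evidence \<Rightarrow> nat" where
  "Bc e = length (filter (\<lambda>s. s = sb) e)"

definition Dd :: "evidence \<Rightarrow> int" where
  "Dd e = int (Gc e) - int (Bc e)"

definition restr :: "evidence \<Rightarrow> nat \<Rightarrow> evidence" where
  "restr e k = drop (length e - k) e"

definition prec :: "evidence \<Rightarrow> evidence \<Rightarrow> bool" where
  "prec m e \<longleftrightarrow> length m \<le> length e \<and> m = restr e (length m)"

definition FG :: "real \<Rightarrow> real \<Rightarrow> evidence \<Rightarrow> real" where
  "FG p q e = (1 - p - q) * p ^ Gc e * q ^ Bc e"

definition FB :: "real \<Rightarrow> real \<Rightarrow> evidence \<Rightarrow> real" where
  "FB p q e = (1 - p - q) * p ^ Bc e * q ^ Gc e"

definition nu :: "real \<Rightarrow> real \<Rightarrow> real \<Rightarrow> evidence \<Rightarrow> real" where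
  "nu p q \<pi>0 e = FG p q e * \<pi>0 / (FG p q e * \<pi>0 + FB p q e * (1 - \<pi>0))"

definition UC :: "evidence \<Rightarrow> evidence set" where
  "UC m = {e. prec m e}"

text \<open>Truth-leaning equilibrium (\<sigma>, a, \<mu>); \<sigma> e is the sender's mixed message given evidence e,
  so \<sigma>*(m|e) = pmf (\<sigma> e) m.\<close>
definition equilibrium ::
  "real \<Rightarrow> real \<Rightarrow> real \<Rightarrow> (evidence \<Rightarrow> evidence pmf) \<Rightarrow> (evidence \<Rightarrow> real) \<Rightarrow> (evidence \<Rightarrow> real) \<Rightarrow> bool"
  where
  "equilibrium p q \<pi>0 \<sigma> a \<mu> \<longleftrightarrow>
     (\<forall>e. set_pmf (\<sigma> e) \<subseteq> {m. prec m e}) \<and>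
     (\<forall>e. \<forall>m \<in> set_pmf (\<sigma> e). \<forall>m'. prec m' e \<longrightarrow> a m' \<le> a m) \<and>
     a = \<mu> \<and>
     (\<forall>m. (\<exists>e. m \<in> set_pmf (\<sigma> e)) \<longrightarrow>
        \<mu> m = (\<Sum>\<^sub>\<infinity>e\<in>UC m. pmf (\<sigma> e) m * FG p q e * \<pi>0) /
               (\<Sum>\<^sub>\<infinity>e\<in>UC m. pmf (\<sigma> e) m * (FG p q e * \<pi>0 + FB p q e * (1 - \<pi>0)))) \<and>
     (\<forall>e. (\<forall>m'. prec m' e \<longrightarrow> a m' \<le> a e) \<longrightarrow> pmf (\<sigma> e) e = 1) \<and>
     (\<forall>m. (\<nexists>e. m \<in> set_pmf (\<sigma> e)) \<longrightarrow> \<mu> m = nu p q \<pi>0 m)"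

definition Nmax :: "evidence \<Rightarrow> int" where
  "Nmax e = Max {Dd (restr e k) | k. k \<le> length e}"

definition alpha :: "real \<Rightarrow> real \<Rightarrow> real" where
  "alpha p q = (1 - sqrt (1 - 4 * p * q)) / 2"

definition Vval :: "real \<Rightarrow> real \<Rightarrow> real \<Rightarrow> evidence \<Rightarrow> real" where
  "Vval p q \<pi>0 e = 1 / (1 + (1 - \<pi>0) / \<pi>0 * ((p - alpha p q) / (q - alpha p q))
                              * (q / p) powi (Nmax e + 1))"

definition nstar :: "real \<Rightarrow> real \<Rightarrow> real" where
  "nstar p q = log (p / q) ((p - alpha p q) / (q - alpha p q)) - 1"

end

(* Write c(t) for the likelihood ratio F_B/F_G that turns the prior into the best action
   available to type t (the largest action of a suffix of t), and excess(t) = F_B(t) - c(t) F_G(t);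
   the types with positive excess are those that prefer pooling to full disclosure. Bayes
   consistency makes the excess vanish on the pool of every message, so exchanging sums shows that
   the excess summed over the extensions of e is nonnegative, and that it vanishes when e carries
   a new best action, since then all extensions of e send messages extending e.

   Along extensions, the weights F_G turn D into a random walk that steps up with probability p,
   down with probability q, and dies otherwise. On a plateau of c the summed excess is bounded by
   the value of an optimal stopping problem for this walk, which is negative at levels where
   K z^D < c; hence c(e) <= K z^D(e). At a new best, comparing with the sum of F_G K z^N over the
   extensions gives c >= K z^N. As c only changes at new bests, c(t) = K z^N(t) with z = q/p and
   K = (p/q)^n*, which is the formula for V. Type e therefore discloses iff z^D(e) <= K z^N(e),
   i.e. iff D(e) >= N(e) - n*; and the summed excess vanishes at the longest suffix y of e with
   D(y) = N(e), so that no message sent by e is shorter than y. *)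

theory Submission
  imports Defs "HOL-Library.Sublist"
begin

lemma power_mult_sum_powers_le:
  fixes b g :: real
  assumes "0 < b" "b \<le> g"
  shows "b ^ j * (\<Sum>i<Suc j. g ^ i) \<le> g ^ j * (\<Sum>i<Suc j. b ^ i)"
proof -
  have "b ^ j * g ^ i \<le> g ^ j * b ^ i" if "i < Suc j" for i
  proof -
    have "b ^ j = b ^ i * b ^ (j - i)" "g ^ j = g ^ i * g ^ (j - i)"
      using that by (simp_all flip: power_add)
    moreover have "b ^ (j - i) \<le> g ^ (j - i)" using assms by (intro power_mono) auto
    ultimately show ?thesis using assms by (simp add: mult_left_mono mult.left_commute)
  qed
  then have "(\<Sum>i<Suc j. b ^ j * g ^ i) \<le> (\<Sum>i<Suc j. g ^ j * b ^ i)"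
    by (intro sum_mono) auto
  then show ?thesis by (simp only: sum_distrib_left)
qed

lemma if_le_max:
  fixes c x :: real
  assumes "0 \<le> c"
  shows "(if P then c * x else 0) \<le> c * max 0 x"
  using mult_left_mono[OF max.cobounded2 assms] mult_nonneg_nonneg[OF assms max.cobounded1]
  by simp

lemma set_pmf_eq_singleton: "pmf P x = 1 \<Longrightarrow> set_pmf P = {x}"
proof -
  assume x: "pmf P x = 1"
  then have "measure_pmf.prob P (UNIV - {x}) = 0"
    using measure_pmf.prob_compl[of "{x}" P] by (simp add: measure_pmf_single)
  then have "set_pmf P \<inter> (UNIV - {x}) = {}"
    by (simp add: measure_pmf_zero_iff Int_commute)
  moreover have "x \<in> set_pmf P" using x by (simp add: set_pmf_iff)
  ultimately show ?thesis by auto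
qed

lemma member_le_infsum:
  fixes f :: "'a \<Rightarrow> real"
  assumes "f summable_on A" "\<And>y. y \<in> A \<Longrightarrow> 0 \<le> f y" "x \<in> A"
  shows "f x \<le> infsum f A"
  using finite_sum_le_infsum[of f A "{x}"] assms by auto

lemma summable_on_abs_bound:
  fixes f g :: "'a \<Rightarrow> real"
  assumes "(\<lambda>t. \<bar>g t\<bar>) summable_on A" "\<And>t. t \<in> A \<Longrightarrow> \<bar>f t\<bar> \<le> \<bar>g t\<bar>"
  shows "f summable_on A"
  by (rule abs_summable_summable, rule summable_on_comparison_test[OF assms(1)]) (use assms(2) in auto)

lemma
  fixes u v :: "'a \<Rightarrow> real"
  assumes "u summable_on A" "v summable_on A"
  shows summable_on_lincomb: "(\<lambda>t. c * u t + d * v t) summable_on A"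
    and infsum_lincomb: "infsum (\<lambda>t. c * u t + d * v t) A = c * infsum u A + d * infsum v A"
  using assms
  by (simp_all add: summable_on_add summable_on_cmult_right infsum_add infsum_cmult_right)

section \<open>Likelihood ratios\<close>

text \<open>The likelihood ratio \<open>F\<^sub>B / F\<^sub>G\<close> that turns the prior \<open>\<pi>0\<close> into the posterior \<open>x\<close>.\<close>

definition lik_ratio :: "real \<Rightarrow> real \<Rightarrow> real" where
  "lik_ratio \<pi>0 x = \<pi>0 * (1 - x) / ((1 - \<pi>0) * x)"

lemma lik_ratio_le_iff:
  assumes "0 < \<pi>0" "\<pi>0 < 1" "0 < x" "0 < y"
  shows "lik_ratio \<pi>0 x \<le> lik_ratio \<pi>0 y \<longleftrightarrow> y \<le> x"
proof -
  have eq: "lik_ratio \<pi>0 w = \<pi>0 / (1 - \<pi>0) * (inverse w - 1)" if "0 < w" for w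
    using assms(1,2) that by (simp add: lik_ratio_def field_simps)
  have "0 < \<pi>0 / (1 - \<pi>0)" using assms by simp
  then have "lik_ratio \<pi>0 x \<le> lik_ratio \<pi>0 y \<longleftrightarrow> inverse x - 1 \<le> inverse y - 1"
    using assms by (simp only: eq mult_le_cancel_left_pos)
  also have "\<dots> \<longleftrightarrow> y \<le> x"
    using assms by (simp add: inverse_le_iff_le)
  finally show ?thesis .
qed

lemma lik_ratio_pos: "0 < \<pi>0 \<Longrightarrow> \<pi>0 < 1 \<Longrightarrow> 0 < x \<Longrightarrow> x < 1 \<Longrightarrow> 0 < lik_ratio \<pi>0 x"
  by (simp add: lik_ratio_def)

lemma lik_ratio_posterior:
  assumes "0 < \<pi>0" "\<pi>0 < 1" "0 < g" "0 < b"
  shows "lik_ratio \<pi>0 (g * \<pi>0 / (g * \<pi>0 + b * (1 - \<pi>0))) = b / g"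
proof -
  define D where "D = g * \<pi>0 + b * (1 - \<pi>0)"
  have D: "0 < D" using assms by (simp add: D_def add_pos_pos)
  then have "1 - g * \<pi>0 / D = b * (1 - \<pi>0) / D"
    by (simp add: D_def field_simps)
  then have "lik_ratio \<pi>0 (g * \<pi>0 / D) = \<pi>0 * (b * (1 - \<pi>0) / D) / ((1 - \<pi>0) * (g * \<pi>0 / D))"
    by (simp add: lik_ratio_def)
  also have "\<dots> = b / g"
    using assms D by (simp add: field_simps)
  finally show ?thesis by (simp add: D_def)
qed

lemma posterior_bounds:
  fixes \<pi>0 g b :: real
  assumes "0 < \<pi>0" "\<pi>0 < 1" "0 < g" "0 < b"
  shows "0 < g * \<pi>0 / (g * \<pi>0 + b * (1 - \<pi>0))" "g * \<pi>0 / (g * \<pi>0 + b * (1 - \<pi>0)) < 1"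
proof -
  have pos: "0 < g * \<pi>0" "0 < b * (1 - \<pi>0)"
    using assms by simp_all
  then have den: "0 < g * \<pi>0 + b * (1 - \<pi>0)" by (rule add_pos_pos)
  show "0 < g * \<pi>0 / (g * \<pi>0 + b * (1 - \<pi>0))"
    using pos(1) den by (rule divide_pos_pos)
  show "g * \<pi>0 / (g * \<pi>0 + b * (1 - \<pi>0)) < 1"
    using pos(2) by (subst divide_less_eq_1_pos[OF den]) simp
qed

lemma lik_ratio_inj:
  assumes "0 < \<pi>0" "\<pi>0 < 1" "0 < x" "0 < y" "lik_ratio \<pi>0 x = lik_ratio \<pi>0 y"
  shows "x = y"
  using lik_ratio_le_iff[OF assms(1-4)] lik_ratio_le_iff[OF assms(1,2,4,3)] assms(5) by simp

section \<open>Evidence\<close>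

lemma prec_iff_suffix: "prec m e \<longleftrightarrow> suffix m e"
proof
  assume "prec m e"
  then show "suffix m e" by (metis prec_def restr_def suffix_drop)
qed (auto simp: prec_def restr_def suffix_def)

lemma UC_eq: "UC m = {e. suffix m e}"
  by (simp add: UC_def prec_iff_suffix)

lemma finite_suffixes: "finite {m. suffix m e}"
  by (simp flip: set_suffixes_eq)

lemma UC_Cons_split:
  "UC t = insert t (UC (sg # t) \<union> UC (sb # t))"
  "t \<notin> UC (sg # t) \<union> UC (sb # t)" "UC (sg # t) \<inter> UC (sb # t) = {}"
proof -
  have "suffix t u \<longleftrightarrow> u = t \<or> suffix (sg # t) u \<or> suffix (sb # t) u" for u
  proof
    assume "suffix t u"
    then obtain x where u: "u = x @ t" by (auto elim: suffixE)
    show "u = t \<or> suffix (sg # t) u \<or> suffix (sb # t) u"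
    proof (cases x rule: rev_cases)
      case (snoc y s)
      then have "u = y @ s # t" using u by simp
      then show ?thesis by (cases s) (auto intro: suffixI)
    qed (simp add: u)
  qed (auto dest: suffix_ConsD)
  then show "UC t = insert t (UC (sg # t) \<union> UC (sb # t))"
    by (auto simp: UC_eq)
  show "t \<notin> UC (sg # t) \<union> UC (sb # t)"
    by (auto simp: UC_eq dest: suffix_length_le)
  have "\<not> suffix (sg # t) (sb # t)" "\<not> suffix (sb # t) (sg # t)"
    by (auto simp: suffix_Cons dest: suffix_length_le)
  then show "UC (sg # t) \<inter> UC (sb # t) = {}"
    by (auto simp: UC_eq dest: suffix_same_cases)
qed

lemma Gc_simps [simp]:
  "Gc [] = 0" "Gc (sg # t) = Suc (Gc t)" "Gc (sb # t) = Gc t" "Gc (x @ y) = Gc x + Gc y"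
  by (simp_all add: Gc_def)

lemma Bc_simps [simp]:
  "Bc [] = 0" "Bc (sg # t) = Bc t" "Bc (sb # t) = Suc (Bc t)" "Bc (x @ y) = Bc x + Bc y"
  by (simp_all add: Bc_def)

lemma Dd_simps [simp]: "Dd [] = 0" "Dd (sg # t) = Dd t + 1" "Dd (sb # t) = Dd t - 1"
  by (simp_all add: Dd_def)

lemma Nmax_eq_Max_suffixes: "Nmax e = Max (Dd ` {m. suffix m e})"
proof -
  have "{restr e k | k. k \<le> length e} = {m. suffix m e}"
  proof (intro set_eqI iffI)
    fix m assume "m \<in> {restr e k | k. k \<le> length e}"
    then show "m \<in> {m. suffix m e}" by (auto simp: restr_def suffix_drop)
  next
    fix m assume "m \<in> {m. suffix m e}"
    then have "prec m e" by (simp add: prec_iff_suffix)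
    then show "m \<in> {restr e k | k. k \<le> length e}" by (auto simp: prec_def)
  qed
  moreover have "{Dd (restr e k) | k. k \<le> length e} = Dd ` {restr e k | k. k \<le> length e}"
    by blast
  ultimately show ?thesis by (simp add: Nmax_def)
qed

lemma Nmax_ge: "suffix m e \<Longrightarrow> Dd m \<le> Nmax e"
  by (simp add: Nmax_eq_Max_suffixes finite_suffixes)

lemma Dd_le_Nmax: "Dd e \<le> Nmax e"
  by (simp add: Nmax_ge)

lemma Nmax_attained: "\<exists>y. suffix y e \<and> Dd y = Nmax e"
proof -
  have "Nmax e \<in> Dd ` {m. suffix m e}"
    unfolding Nmax_eq_Max_suffixes by (rule Max_in) (auto simp: finite_suffixes)
  then show ?thesis by auto
qed

lemma Nmax_mono:
  assumes "suffix y e"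
  shows "Nmax y \<le> Nmax e"
proof -
  obtain m where "suffix m y" "Dd m = Nmax y" using Nmax_attained by blast
  then show ?thesis using assms Nmax_ge[of m e] suffix_order.trans by fastforce
qed

lemma Nmax_Cons: "Nmax (s # t) = max (Dd (s # t)) (Nmax t)"
proof -
  have "{m. suffix m (s # t)} = insert (s # t) {m. suffix m t}"
    by (auto simp: suffix_Cons)
  moreover have "Dd ` {m. suffix m t} \<noteq> {}" by auto
  ultimately show ?thesis
    by (simp add: Nmax_eq_Max_suffixes finite_suffixes)
qed

lemma Nmax_Cons_sg: "Nmax (sg # t) = max (Nmax t) (Dd t + 1)"
  by (simp add: Nmax_Cons max.commute)

lemma Nmax_Cons_sb: "Nmax (sb # t) = Nmax t"
  using Dd_le_Nmax[of t] by (simp add: Nmax_Cons)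

lemma FB_eq_FG: "FB p q = FG q p"
  by (simp add: fun_eq_iff FB_def FG_def algebra_simps)

lemma FG_Cons [simp]: "FG p q (sg # t) = p * FG p q t" "FG p q (sb # t) = q * FG p q t"
  by (simp_all add: FG_def)

lemma FB_Cons [simp]: "FB p q (sg # t) = q * FB p q t" "FB p q (sb # t) = p * FB p q t"
  by (simp_all add: FB_def)

lemma finite_lists_length_less: "finite {x :: evidence. length x < n}"
proof -
  have "set x \<subseteq> {sg, sb}" for x :: evidence
    using signal.exhaust by auto
  with finite_lists_length_le[of "{sg, sb}" n] show ?thesis
    by (auto intro: finite_subset[rotated])
qed

lemma sum_power_Gc_Bc:
  fixes a b :: real
  shows "(\<Sum>x\<in>{x :: evidence. length x = n}. a ^ Gc x * b ^ Bc x) = (a + b) ^ n"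
proof (induction n)
  case (Suc n)
  let ?L = "{x :: evidence. length x = n}"
  have L: "{x :: evidence. length x = Suc n} = Cons sg ` ?L \<union> Cons sb ` ?L"
  proof (intro set_eqI iffI)
    fix x :: evidence
    assume "x \<in> {x. length x = Suc n}"
    then obtain s y where "x = s # y" "length y = n" by (cases x) auto
    then show "x \<in> Cons sg ` ?L \<union> Cons sb ` ?L" by (cases s) auto
  qed auto
  have "finite ?L"
    by (rule finite_subset[OF _ finite_lists_length_less[of "Suc n"]]) auto
  then have "(\<Sum>x\<in>{x :: evidence. length x = Suc n}. a ^ Gc x * b ^ Bc x)
      = (\<Sum>x\<in>Cons sg ` ?L. a ^ Gc x * b ^ Bc x) + (\<Sum>x\<in>Cons sb ` ?L. a ^ Gc x * b ^ Bc x)"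
    unfolding L by (intro sum.union_disjoint) auto
  also have "\<dots> = (\<Sum>x\<in>?L. a * (a ^ Gc x * b ^ Bc x)) + (\<Sum>x\<in>?L. b * (a ^ Gc x * b ^ Bc x))"
    by (simp add: sum.reindex inj_on_def mult_ac)
  finally show ?case
    by (simp add: Suc.IH algebra_simps flip: sum_distrib_left)
qed simp

lemma sum_FG_lists_length_less: "sum (FG p q) {x. length x < n} = 1 - (p + q) ^ n"
proof (induction n)
  case (Suc n)
  have "finite {x :: evidence. length x = n}"
    by (rule finite_subset[OF _ finite_lists_length_less[of "Suc n"]]) auto
  moreover have "{x :: evidence. length x < n} \<inter> {x. length x = n} = {}"
    by auto
  ultimately have "sum (FG p q) ({x. length x < n} \<union> {x. length x = n})
      = sum (FG p q) {x. length x < n} + sum (FG p q) {x. length x = n}"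
    by (intro sum.union_disjoint finite_lists_length_less)
  moreover have "{x :: evidence. length x < Suc n} = {x. length x < n} \<union> {x. length x = n}"
    by auto
  moreover have "sum (FG p q) {x. length x = n} = (1 - p - q) * (p + q) ^ n"
    by (simp add: FG_def mult.assoc sum_power_Gc_Bc flip: sum_distrib_left)
  ultimately show ?case
    by (simp add: Suc.IH algebra_simps)
qed simp

lemma sum_FG_le_1:
  assumes "0 \<le> p" "0 \<le> q" "p + q \<le> 1" "finite F"
  shows "sum (FG p q) F \<le> 1"
proof -
  obtain n where "\<forall>k \<in> length ` F. k < n"
    using assms(4) finite_nat_set_iff_bounded by blast
  then have "sum (FG p q) F \<le> sum (FG p q) {x. length x < n}"
    using assms by (intro sum_mono2 finite_lists_length_less) (auto simp: FG_def)
  also have "\<dots> \<le> 1"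
    using assms by (simp add: sum_FG_lists_length_less)
  finally show ?thesis .
qed

lemma summable_on_FG:
  assumes "0 \<le> p" "0 \<le> q" "p + q \<le> 1"
  shows "FG p q summable_on A"
proof -
  have "FG p q summable_on UNIV"
    using assms sum_FG_le_1[of p q]
    by (intro nonneg_bdd_above_summable_on bdd_aboveI[where M = 1]) (auto simp: FG_def)
  then show ?thesis by (rule summable_on_subset_banach) simp
qed

lemma infsum_FG_le_1:
  assumes "0 \<le> p" "0 \<le> q" "p + q \<le> 1"
  shows "infsum (FG p q) A \<le> 1"
  using assms sum_FG_le_1[of p q] by (intro infsum_le_finite_sums summable_on_FG) auto

lemma longest_peak_suffix:
  obtains y where "suffix y e" "Dd y = Nmax e"
    "length y = Max {k. k \<le> length e \<and> Dd (restr e k) = Nmax e}"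
proof -
  let ?KS = "{k. k \<le> length e \<and> Dd (restr e k) = Nmax e}"
  obtain y where y: "suffix y e" "Dd y = Nmax e" using Nmax_attained by blast
  then have "length y \<in> ?KS"
    by (auto simp: suffix_length_le restr_def elim: suffixE)
  then have "Max ?KS \<in> ?KS"
    by (intro Max_in) (auto intro: finite_subset[of _ "{..length e}"])
  then show ?thesis
    by (intro that[of "restr e (Max ?KS)"]) (auto simp: restr_def suffix_drop)
qed

section \<open>The signal process\<close>

locale signal_params =
  fixes p q :: real
  assumes q_pos: "0 < q" and q_less_p: "q < p" and p_plus_q_less_1: "p + q < 1"
begin

definition z :: real where "z = q / p"
definition \<beta> :: real where "\<beta> = alpha p q / p"
definition \<gamma> :: real where "\<gamma> = alpha p q / q"
definition K :: real where "K = (p - alpha p q) / (q - alpha p q) * z"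
definition S :: real where "S = 1 / (1 - p - q)"

text \<open>Extending evidence by one signal multiplies \<open>F\<^sub>G\<close> by \<open>p\<close> (a \<open>g\<close>) or by \<open>q\<close> (a \<open>b\<close>).
  With these weights, \<open>\<beta>\<close> and \<open>\<gamma>\<close> are the total weights of the extensions along which \<open>D\<close> first
  drops by one, respectively first rises by one; hence \<open>\<beta>_fixpoint\<close> and \<open>\<gamma>_fixpoint\<close>.\<close>

lemma p_pos: "0 < p"
  using q_pos q_less_p by linarith

lemma z_pos: "0 < z" and z_less_1: "z < 1" and p_mult_z: "p * z = q"
  using q_pos q_less_p p_pos by (simp_all add: z_def)

lemma z_powi_Suc: "z powi (n + 1) = z powi n * z"
  using z_pos by (simp add: power_int_add)

lemma S_pos: "0 < S" and S_mult: "S * (1 - p - q) = 1"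
  using p_plus_q_less_1 by (simp_all add: S_def)

lemma alpha_quadratic: "alpha p q ^ 2 = alpha p q - p * q"
proof -
  have "(p + q) * (p + q) < 1 * 1"
    using p_plus_q_less_1 q_pos p_pos by (intro mult_strict_mono) auto
  moreover have "(p + q) * (p + q) - 4 * p * q = (p - q) ^ 2"
    by (simp add: power2_eq_square algebra_simps)
  ultimately have "0 \<le> 1 - 4 * p * q"
    using zero_le_power2[of "p - q"] by linarith
  then have "sqrt (1 - 4 * p * q) ^ 2 = 1 - 4 * p * q" by simp
  then show ?thesis by (simp add: alpha_def power2_eq_square field_simps)
qed

lemma alpha_pos: "0 < alpha p q"
proof -
  have "sqrt (1 - 4 * p * q) < sqrt 1"
    using p_pos q_pos by (intro real_sqrt_less_mono) simp
  then show ?thesis by (simp add: alpha_def)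
qed

lemma alpha_less_q: "alpha p q < q"
proof -
  have "(p + q) * q < 1 * q"
    using p_plus_q_less_1 q_pos by (intro mult_strict_right_mono) auto
  then have "sqrt ((1 - 2 * q) ^ 2) < sqrt (1 - 4 * p * q)"
    by (intro real_sqrt_less_mono) (simp add: power2_eq_square algebra_simps)
  moreover have "0 < 1 - 2 * q" using q_less_p p_plus_q_less_1 by linarith
  ultimately show ?thesis by (simp add: alpha_def)
qed

lemma \<beta>_pos: "0 < \<beta>" and \<gamma>_pos: "0 < \<gamma>" and \<beta>_less_\<gamma>: "\<beta> < \<gamma>" and \<gamma>_less_1: "\<gamma> < 1"
  using alpha_pos alpha_less_q q_pos q_less_p
  by (simp_all add: \<beta>_def \<gamma>_def frac_less2)

lemma \<beta>_less_1: "\<beta> < 1"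
  using \<beta>_less_\<gamma> \<gamma>_less_1 by linarith

lemma z_mult_\<gamma>: "z * \<gamma> = \<beta>"
  using q_pos p_pos by (simp add: z_def \<beta>_def \<gamma>_def)

lemma \<beta>_fixpoint: "\<beta> = q + p * \<beta> ^ 2"
  using alpha_quadratic p_pos by (simp add: \<beta>_def power2_eq_square field_simps)

lemma \<gamma>_fixpoint: "\<gamma> = p + q * \<gamma> ^ 2"
  using alpha_quadratic q_pos by (simp add: \<gamma>_def power2_eq_square field_simps)

lemma K_eq: "K = (1 - \<beta>) / (1 - \<gamma>)"
  using alpha_less_q q_less_p p_pos q_pos by (simp add: K_def \<beta>_def \<gamma>_def z_def field_simps)

lemma K_mult: "K * (1 - \<gamma>) = 1 - \<beta>"
  using K_eq \<gamma>_less_1 by simp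

lemma K_gt_1: "1 < K"
  using K_eq \<beta>_less_\<gamma> \<gamma>_less_1 by simp

lemma K_pos: "0 < K"
  using K_gt_1 by simp

lemma nstar_eq_log_K: "nstar p q = log (p / q) K"
proof -
  have "0 < (p - alpha p q) / (q - alpha p q)"
    using alpha_less_q q_less_p by simp
  then have "log (p / q) K = log (p / q) ((p - alpha p q) / (q - alpha p q)) + log (p / q) z"
    unfolding K_def using z_pos by (rule log_mult_pos)
  moreover have "log (p / q) z = -1"
  proof -
    have "z = inverse (p / q)" by (simp add: z_def)
    then have "log (p / q) z = - log (p / q) (p / q)" by (simp only: log_inverse)
    then show ?thesis using q_pos q_less_p by simp
  qed
  ultimately show ?thesis by (simp add: nstar_def)
qed

lemma nstar_pos: "0 < nstar p q"
  using K_gt_1 q_pos q_less_p by (simp add: nstar_eq_log_K)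

lemma powi_le_K_powi_iff:
  "z powi d \<le> K * z powi n \<longleftrightarrow> real_of_int n - nstar p q \<le> real_of_int d"
proof -
  have base: "1 < p / q" using q_pos q_less_p by simp
  have "z powi (d - n) = inverse ((p / q) powi (d - n))"
    by (simp add: z_def flip: power_int_inverse)
  also have "\<dots> = (p / q) powi (n - d)"
    using power_int_minus[of "p / q" "d - n"] by simp
  finally have "z powi (d - n) = (p / q) powi (n - d)" .
  moreover have "z powi d \<le> K * z powi n \<longleftrightarrow> z powi (d - n) \<le> K"
    using z_pos by (simp add: power_int_diff pos_divide_le_eq)
  ultimately have "z powi d \<le> K * z powi n \<longleftrightarrow> (p / q) powi (n - d) \<le> K" by simp
  also have "(p / q) powi (n - d) = (p / q) powr real_of_int (n - d)"
    using p_pos q_pos powr_real_of_int'[of "p / q" "n - d"] by auto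
  also have "\<dots> \<le> K \<longleftrightarrow> real_of_int (n - d) \<le> log (p / q) K"
    using base K_pos by (simp add: le_log_iff)
  finally show ?thesis by (simp add: nstar_eq_log_K) linarith
qed

lemma K_eq_1_plus: "K = 1 + S * (1 - \<beta>) * (p - q)"
proof -
  have "(\<gamma> - \<beta>) * (1 - p - q) - (1 - \<gamma>) * (1 - \<beta>) * (p - q)
      = (alpha p q - p * q - alpha p q ^ 2) * (p - q) / (p * q)"
    using p_pos q_pos by (simp add: \<gamma>_def \<beta>_def power2_eq_square field_simps)
  then have "(\<gamma> - \<beta>) * (1 - p - q) = (1 - \<gamma>) * (1 - \<beta>) * (p - q)"
    using alpha_quadratic by simp
  then have "(K - 1) * (1 - p - q) = (1 - \<beta>) * (p - q)"
    using \<gamma>_less_1 by (simp add: K_eq field_simps)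
  then show ?thesis
    using p_plus_q_less_1 by (simp add: S_def field_simps)
qed

lemma K_z_power_le: "K * z ^ j * (1 - \<gamma> ^ Suc j) \<le> 1 - \<beta> ^ Suc j"
proof -
  have z_power: "z ^ j = \<beta> ^ j / \<gamma> ^ j"
    using \<gamma>_pos by (simp add: power_mult_distrib flip: z_mult_\<gamma>)
  have "K * z ^ j * (1 - \<gamma> ^ Suc j) = (1 - \<beta>) * (\<beta> ^ j * (\<Sum>i<Suc j. \<gamma> ^ i)) / \<gamma> ^ j"
    unfolding K_eq z_power one_diff_power_eq using \<gamma>_less_1 \<gamma>_pos by (simp add: field_simps)
  also have "\<dots> \<le> (1 - \<beta>) * (\<gamma> ^ j * (\<Sum>i<Suc j. \<beta> ^ i)) / \<gamma> ^ j"
    using \<beta>_less_1 \<gamma>_pos \<beta>_pos \<beta>_less_\<gamma>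
    by (intro divide_right_mono mult_left_mono power_mult_sum_powers_le) auto
  also have "\<dots> = 1 - \<beta> ^ Suc j"
    using \<gamma>_pos one_diff_power_eq[of \<beta> "Suc j"] by simp
  finally show ?thesis .
qed

text \<open>\<open>S * F\<^sub>G u * peak_value (D u) (N u)\<close> is the sum of \<open>F\<^sub>G v * K * z ^ N v\<close> over the extensions
  \<open>v\<close> of \<open>u\<close>: \<open>N\<close> stays at \<open>n\<close> until \<open>D\<close> first exceeds \<open>n\<close>, which has total weight
  \<open>\<gamma> ^ (n - d + 1)\<close>, and from there on the sum is \<open>S * F\<^sub>G v * z ^ (n + 1)\<close>.\<close>

definition peak_value :: "int \<Rightarrow> int \<Rightarrow> real" where
  "peak_value d n = K * z powi n - (K * z powi n - z powi (n + 1)) * \<gamma> ^ Suc (nat (n - d))"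

lemma peak_value_diag: "peak_value n n = z powi n"
proof -
  have "peak_value n n = z powi n * (K * (1 - \<gamma>) + z * \<gamma>)"
    unfolding peak_value_def z_powi_Suc by (simp add: algebra_simps)
  then show ?thesis by (simp add: K_mult z_mult_\<gamma>)
qed

lemma peak_value_nonneg: "0 \<le> peak_value d n"
proof -
  have "z powi n * z \<le> z powi n * K"
    using K_gt_1 z_less_1 z_pos by (intro mult_left_mono) auto
  then have "0 \<le> K * z powi n - z powi (n + 1)"
    by (simp add: z_powi_Suc mult.commute)
  moreover have "\<gamma> ^ Suc (nat (n - d)) \<le> 1"
    using \<gamma>_pos \<gamma>_less_1 by (intro power_le_one) auto
  ultimately have "(K * z powi n - z powi (n + 1)) * \<gamma> ^ Suc (nat (n - d)) \<le> K * z powi n - z powi (n + 1)"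
    by (simp add: mult_left_le)
  moreover have "0 < z powi (n + 1)"
    using z_pos by simp
  ultimately show ?thesis
    by (simp add: peak_value_def)
qed

lemma z_power_mult_le_1: "z ^ m * (K - (K - z) * \<gamma> ^ Suc m) \<le> 1"
proof (induction m)
  case 0
  have "K - (K - z) * \<gamma> = K * (1 - \<gamma>) + z * \<gamma>"
    by (simp add: algebra_simps)
  then show ?case
    using K_mult z_mult_\<gamma> by simp
next
  case (Suc m)
  have "K * (1 - z) - (K - z) * \<gamma> * (1 - z * \<gamma>) - (1 - z * \<gamma>) * (1 - z)
      = (K * (1 - \<gamma>) - (1 - z * \<gamma>)) * (1 - z - z * \<gamma>)"
    by (simp add: algebra_simps)
  then have identity: "K * (1 - z) - (K - z) * \<gamma> * (1 - z * \<gamma>) = (1 - z * \<gamma>) * (1 - z)"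
    using K_mult z_mult_\<gamma> by simp
  have "(K - z) * \<gamma> ^ Suc m * (1 - z * \<gamma>) \<le> (K - z) * \<gamma> * (1 - z * \<gamma>)"
    using K_gt_1 z_less_1 \<gamma>_pos \<gamma>_less_1 \<beta>_less_1 z_mult_\<gamma> power_decreasing[of 1 "Suc m" \<gamma>]
    by (intro mult_right_mono mult_left_mono) auto
  also have "\<dots> \<le> K * (1 - z)"
  proof -
    have "0 \<le> (1 - z * \<gamma>) * (1 - z)"
      using \<beta>_less_1 z_less_1 z_mult_\<gamma> by simp
    then show ?thesis using identity by linarith
  qed
  finally have step: "(K - z) * \<gamma> ^ Suc m * (1 - z * \<gamma>) \<le> K * (1 - z)" .
  have "K - (K - z) * \<gamma> ^ Suc m - z * (K - (K - z) * \<gamma> ^ Suc (Suc m))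
      = K * (1 - z) - (K - z) * \<gamma> ^ Suc m * (1 - z * \<gamma>)"
    by (simp add: algebra_simps)
  then have "z * (K - (K - z) * \<gamma> ^ Suc (Suc m)) \<le> K - (K - z) * \<gamma> ^ Suc m"
    using step by linarith
  then have "z ^ m * (z * (K - (K - z) * \<gamma> ^ Suc (Suc m))) \<le> z ^ m * (K - (K - z) * \<gamma> ^ Suc m)"
    using z_pos by (intro mult_left_mono) auto
  moreover have "z ^ Suc m * (K - (K - z) * \<gamma> ^ Suc (Suc m))
      = z ^ m * (z * (K - (K - z) * \<gamma> ^ Suc (Suc m)))"
    by (simp add: mult_ac)
  ultimately show ?case
    using Suc.IH by linarith
qed

lemma peak_value_le: assumes "d \<le> n" shows "peak_value d n \<le> z powi d"
proof -
  define m where "m = nat (n - d)"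
  have "n = d + int m" using assms by (simp add: m_def)
  then have "z powi n = z powi d * z ^ m"
    using z_pos by (simp add: power_int_add)
  then have "peak_value d n = z powi d * (z ^ m * (K - (K - z) * \<gamma> ^ Suc m))"
    unfolding peak_value_def z_powi_Suc by (simp add: m_def algebra_simps)
  also have "\<dots> \<le> z powi d"
    using z_power_mult_le_1 z_pos by (simp add: mult_left_le)
  finally show ?thesis .
qed

lemma peak_value_rec:
  assumes "d \<le> n"
  shows "S * peak_value d n
    = K * z powi n + S * p * peak_value (d + 1) (max n (d + 1)) + S * q * peak_value (d - 1) n"
proof -
  define A where "A = K * z powi n"
  define B where "B = K * z powi n - z powi (n + 1)"
  have zero: "S * (1 - p - q) - 1 = 0" "\<gamma> - p - q * \<gamma> ^ 2 = 0"
    using S_mult \<gamma>_fixpoint by simp_all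
  show ?thesis
  proof (cases "d < n")
    case True
    define j where "j = nat (n - d - 1)"
    have "nat (n - d) = Suc j" "nat (n - (d + 1)) = j" "nat (n - (d - 1)) = Suc (Suc j)"
      using True by (simp_all add: j_def)
    then have "S * peak_value d n - (K * z powi n + S * p * peak_value (d + 1) n + S * q * peak_value (d - 1) n)
        = A * (S * (1 - p - q) - 1) - S * B * \<gamma> ^ Suc j * (\<gamma> - p - q * \<gamma> ^ 2)"
      by (simp add: peak_value_def A_def B_def algebra_simps power2_eq_square)
    moreover have "max n (d + 1) = n" using True by simp
    ultimately show ?thesis
      using zero by simp
  next
    case False
    then have "d = n" using assms by simp
    have "peak_value n n = A - B * \<gamma>" "peak_value (n - 1) n = A - B * \<gamma> ^ 2"
      by (simp_all add: peak_value_def A_def B_def numeral_2_eq_2)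
    moreover have "peak_value (n + 1) (n + 1) = A - B"
      by (simp add: peak_value_diag A_def B_def)
    moreover have "S * (A - B * \<gamma>) - (A + S * p * (A - B) + S * q * (A - B * \<gamma> ^ 2))
        = A * (S * (1 - p - q) - 1) - S * B * (\<gamma> - p - q * \<gamma> ^ 2)"
      by (simp add: algebra_simps power2_eq_square)
    ultimately show ?thesis
      using \<open>d = n\<close> zero by (simp add: A_def)
  qed
qed

lemma FG_pos: "0 < FG p q t" and FB_pos: "0 < FB p q t"
  using p_pos q_pos p_plus_q_less_1 by (simp_all add: FG_def FB_def)

lemma FG_nonneg [simp]: "0 \<le> FG p q t" and FB_nonneg [simp]: "0 \<le> FB p q t"
  using FG_pos FB_pos less_imp_le by blast+

lemma FB_eq_FG_z_powi: "FB p q t = FG p q t * z powi Dd t"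
proof (induction t)
  case (Cons s t)
  have "p * z = q" "p * (z powi (Dd t - 1) * z) = q * z powi (Dd t - 1)"
    using p_mult_z by (simp_all add: mult.left_commute)
  then show ?case
    using Cons z_pos power_int_add[of z "Dd t - 1" 1]
    by (cases s) (simp_all add: z_powi_Suc mult_ac)
qed (simp add: FB_def FG_def)

lemma FB_append: "FB p q (x @ t) = FB p q x * FB p q t * S"
  using p_plus_q_less_1 by (simp add: FB_def S_def power_add field_simps)

lemma FB_summable: "FB p q summable_on A"
  using q_pos p_pos p_plus_q_less_1 by (simp add: FB_eq_FG summable_on_FG)

lemma FG_summable: "FG p q summable_on A"
  using q_pos p_pos p_plus_q_less_1 by (simp add: summable_on_FG)

lemma infsum_FB_UC_le: "infsum (FB p q) (UC t) \<le> S * FB p q t"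
proof -
  have "UC t = (\<lambda>x. x @ t) ` UNIV"
    by (auto simp: UC_eq suffix_def)
  then have "infsum (FB p q) (UC t) = infsum (\<lambda>x. FB p q (x @ t)) UNIV"
    by (simp add: infsum_reindex inj_on_def o_def)
  also have "\<dots> = infsum (\<lambda>x. S * FB p q t * FB p q x) UNIV"
    by (simp add: FB_append mult_ac)
  also have "\<dots> = S * FB p q t * infsum (FB p q) UNIV"
    by (rule infsum_cmult_right) (rule FB_summable)
  also have "\<dots> \<le> S * FB p q t"
    using S_pos FB_pos[of t] q_pos p_pos p_plus_q_less_1
    by (intro mult_left_le) (simp_all add: FB_eq_FG infsum_FG_le_1)
  finally show ?thesis .
qed

lemma le_0_if_le_geometric:
  assumes "\<And>n. x \<le> (p + q) ^ n * C"
  shows "x \<le> 0"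
proof -
  have "(\<lambda>n. (p + q) ^ n * C) \<longlonglongrightarrow> 0 * C"
    using p_pos q_pos p_plus_q_less_1 by (intro tendsto_mult LIMSEQ_power_zero) auto
  then show ?thesis
    using assms by (auto intro: LIMSEQ_le_const)
qed

text \<open>A maximum principle: a function on the extensions of \<open>t\<close> that is dominated by the sum over
  the two one-signal extensions and bounded by a combination of \<open>F\<^sub>B\<close> and \<open>F\<^sub>G\<close> cannot be positive,
  since iterating the inequality \<open>n\<close> times brings in the factor \<open>(p + q) ^ n\<close>.\<close>

lemma subharmonic_nonpos:
  fixes g :: "evidence \<Rightarrow> real"
  assumes sub: "\<And>u. suffix t u \<Longrightarrow> g u \<le> g (sg # u) + g (sb # u)"
    and bound: "\<And>u. suffix t u \<Longrightarrow> g u \<le> c * FB p q u + d * FG p q u"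
  shows "g t \<le> 0"
proof -
  have "g u \<le> (p + q) ^ n * (c * FB p q u + d * FG p q u)" if "suffix t u" for n u
    using that
  proof (induction n arbitrary: u)
    case (Suc n)
    have "suffix t (sg # u)" "suffix t (sb # u)"
      using Suc.prems by (simp_all add: suffix_ConsI)
    then show ?case
      using sub[OF Suc.prems] Suc.IH[of "sg # u"] Suc.IH[of "sb # u"] by (simp add: algebra_simps)
  qed (simp add: bound)
  then show ?thesis
    by (intro le_0_if_le_geometric) auto
qed

lemma level_exists:
  assumes "0 < \<theta>"
  obtains \<kappa> where "\<theta> \<le> K * z powi \<kappa>" "K * z powi (\<kappa> + 1) < \<theta>"
proof
  define c where "c = log z (\<theta> / K)"
  have z_powi: "z powi k = z powr real_of_int k" for k
    using z_pos by (simp add: powr_real_of_int')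
  have \<theta>: "\<theta> = K * z powr c"
    using assms z_pos z_less_1 K_pos by (simp add: c_def)
  show "\<theta> \<le> K * z powi \<lfloor>c\<rfloor>"
    unfolding z_powi \<theta> using K_pos z_pos z_less_1 by (intro mult_left_mono powr_mono') auto
  show "K * z powi (\<lfloor>c\<rfloor> + 1) < \<theta>"
    unfolding z_powi \<theta> using K_pos z_pos z_less_1 by (intro mult_strict_left_mono powr_less_mono') auto
qed

definition peak_sum :: "evidence \<Rightarrow> real" where
  "peak_sum u = S * FG p q u * peak_value (Dd u) (Nmax u)"

lemma peak_sum_rec:
  "peak_sum u = FG p q u * (K * z powi Nmax u) + peak_sum (sg # u) + peak_sum (sb # u)"
proof -
  have "peak_sum u = FG p q u * (S * peak_value (Dd u) (Nmax u))"
    by (simp add: peak_sum_def mult_ac)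
  also have "\<dots> = FG p q u * (K * z powi Nmax u)
      + FG p q u * (S * p * peak_value (Dd u + 1) (max (Nmax u) (Dd u + 1)))
      + FG p q u * (S * q * peak_value (Dd u - 1) (Nmax u))"
    by (simp add: peak_value_rec[OF Dd_le_Nmax] algebra_simps)
  finally show ?thesis
    by (simp add: peak_sum_def Nmax_Cons_sg Nmax_Cons_sb mult_ac)
qed

lemma peak_sum_nonneg: "0 \<le> peak_sum u"
  using S_pos peak_value_nonneg by (simp add: peak_sum_def)

lemma peak_sum_le: "peak_sum u \<le> S * FB p q u"
  using peak_value_le[OF Dd_le_Nmax, of u] S_pos FG_pos[of u]
  by (simp add: peak_sum_def FB_eq_FG_z_powi mult_left_mono)

lemma peak_sum_peak: "Dd u = Nmax u \<Longrightarrow> peak_sum u = S * FB p q u"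
  by (simp add: peak_sum_def peak_value_diag FB_eq_FG_z_powi mult_ac)

lemma S_FB_rec: "S * FB p q u = FB p q u + S * FB p q (sg # u) + S * FB p q (sb # u)"
proof -
  have "S * FB p q u = FB p q u * (S * (1 - p - q)) + S * q * FB p q u + S * p * FB p q u"
    by (simp add: algebra_simps)
  then show ?thesis by (simp add: S_mult mult_ac)
qed

end

section \<open>An optimal stopping problem\<close>

text \<open>\<open>T i\<close> is the value of collecting the reward \<open>z ^ j - \<theta>\<close> at every level \<open>j\<close> visited by a walk
  started at \<open>i\<close> that steps up with probability \<open>p\<close>, down with probability \<open>q\<close> and dies otherwise,
  when the walk may be stopped at any later step; continuing is optimal exactly at the levels
  up to \<open>\<kappa>\<close>.\<close>

locale stopping_problem = signal_params +
  fixes \<theta> :: real and \<kappa> :: int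
  assumes \<theta>_pos: "0 < \<theta>" and \<theta>_le: "\<theta> \<le> K * z powi \<kappa>" and \<theta>_gt: "K * z powi (\<kappa> + 1) < \<theta>"
begin

text \<open>\<open>U i j\<close> is the value of the strategy that stops as soon as the walk has risen \<open>j\<close> levels
  above its start \<open>i\<close>.\<close>

definition U :: "int \<Rightarrow> nat \<Rightarrow> real" where
  "U i j = S * (z powi i * (1 - \<beta> ^ j) - \<theta> * (1 - \<gamma> ^ j))"

definition T :: "int \<Rightarrow> real" where
  "T i = (if i \<le> \<kappa> then U i (Suc (nat (\<kappa> - i)))
          else if i = \<kappa> + 1 then (z powi i - \<theta>) + q * U \<kappa> 1
          else z powi i - \<theta>)"

lemma U_0 [simp]: "U i 0 = 0"
  by (simp add: U_def)

lemma U_Suc: "U i (Suc j) = (z powi i - \<theta>) + p * U (i + 1) j + q * U (i - 1) (Suc (Suc j))"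
proof -
  define x where "x = z powi i"
  define y where "y = z powi (i - 1)"
  define B where "B = \<beta> ^ j"
  define G where "G = \<gamma> ^ j"
  have x: "x = y * z" and x': "z powi (i + 1) = x * z"
    using z_pos power_int_add[of z "i - 1" 1] by (simp_all add: x_def y_def power_int_add)
  have "S * (x * (1 - \<beta> * B) - \<theta> * (1 - \<gamma> * G))
      - ((x - \<theta>) + p * (S * (x * z * (1 - B) - \<theta> * (1 - G)))
         + q * (S * (y * (1 - \<beta> * \<beta> * B) - \<theta> * (1 - \<gamma> * \<gamma> * G))))
    = y * z * (S * (1 - p - q) - 1) - S * y * z * B * (\<beta> - q - p * \<beta> ^ 2)
      - \<theta> * (S * (1 - p - q) - 1) + S * \<theta> * G * (\<gamma> - p - q * \<gamma> ^ 2)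
      + S * y * (p * z - q) * (1 - z) + S * y * B * (p * z - q) * (z - \<beta> ^ 2)"
    unfolding x by (simp add: algebra_simps power2_eq_square)
  also have "\<dots> = 0"
  proof -
    have "S * (1 - p - q) - 1 = 0" "\<beta> - q - p * \<beta> ^ 2 = 0" "\<gamma> - p - q * \<gamma> ^ 2 = 0" "p * z - q = 0"
      using S_mult \<beta>_fixpoint \<gamma>_fixpoint p_mult_z by simp_all
    then show ?thesis by (simp only:)
  qed
  finally show ?thesis
    by (simp add: U_def x' mult.assoc flip: x_def y_def B_def G_def)
qed

lemma T_le_\<kappa>: "i \<le> \<kappa> \<Longrightarrow> T i = U i (Suc (nat (\<kappa> - i)))"
  by (simp add: T_def)

lemma T_nonneg: assumes "i \<le> \<kappa>" shows "0 \<le> T i"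
proof -
  define j where "j = nat (\<kappa> - i)"
  have "\<kappa> = i + int j" using assms by (simp add: j_def)
  then have "z powi \<kappa> = z powi i * z ^ j"
    using z_pos by (simp add: power_int_add)
  then have "\<theta> \<le> z powi i * (K * z ^ j)"
    using \<theta>_le by (simp add: mult_ac)
  moreover have "\<gamma> ^ Suc j \<le> 1"
    using \<gamma>_pos \<gamma>_less_1 by (intro power_le_one) auto
  ultimately have "\<theta> * (1 - \<gamma> ^ Suc j) \<le> z powi i * (K * z ^ j) * (1 - \<gamma> ^ Suc j)"
    by (intro mult_right_mono) auto
  also have "\<dots> = z powi i * (K * z ^ j * (1 - \<gamma> ^ Suc j))"
    by (simp add: mult.assoc)
  also have "\<dots> \<le> z powi i * (1 - \<beta> ^ Suc j)"
    using K_z_power_le z_pos by (intro mult_left_mono) auto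
  finally show ?thesis
    using assms S_pos by (simp add: T_le_\<kappa> U_def j_def)
qed

lemma T_succ_\<kappa>: "T (\<kappa> + 1) = (z powi (\<kappa> + 1) - \<theta> / K) * (1 + p * S * (1 - \<beta>))"
proof -
  have qz: "q * z powi \<kappa> = p * z powi (\<kappa> + 1)"
    using p_mult_z by (simp add: z_powi_Suc mult.left_commute)
  have "K * (1 + q * S * (1 - \<gamma>)) = K + q * S * (K * (1 - \<gamma>))"
    by (simp add: algebra_simps)
  also have "\<dots> = K + q * S * (1 - \<beta>)"
    unfolding K_mult ..
  also have "\<dots> = 1 + p * S * (1 - \<beta>)"
    by (subst K_eq_1_plus) (simp add: algebra_simps)
  finally have key: "K * (1 + q * S * (1 - \<gamma>)) = 1 + p * S * (1 - \<beta>)" .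
  have "T (\<kappa> + 1) = z powi (\<kappa> + 1) + S * (1 - \<beta>) * (q * z powi \<kappa>) - \<theta> * (1 + q * S * (1 - \<gamma>))"
    by (simp add: T_def U_def algebra_simps)
  also have "\<dots> = z powi (\<kappa> + 1) * (1 + p * S * (1 - \<beta>)) - \<theta> / K * (K * (1 + q * S * (1 - \<gamma>)))"
    unfolding qz using K_pos by (simp add: algebra_simps)
  also have "\<dots> = (z powi (\<kappa> + 1) - \<theta> / K) * (1 + p * S * (1 - \<beta>))"
    unfolding key by (simp add: algebra_simps)
  finally show ?thesis .
qed

lemma T_neg: assumes "\<kappa> < i" shows "T i < 0"
proof -
  have z_\<kappa>: "z powi (\<kappa> + 1) < \<theta> / K"
    using \<theta>_gt K_pos by (simp add: field_simps)
  show ?thesis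
  proof (cases "i = \<kappa> + 1")
    case True
    have "0 < 1 + p * S * (1 - \<beta>)"
      using p_pos S_pos \<beta>_less_1 by (simp add: add_pos_nonneg)
    then show ?thesis
      using z_\<kappa> True by (simp add: T_succ_\<kappa> mult_neg_pos)
  next
    case False
    have "z powi i \<le> z powi (\<kappa> + 1)"
      using False assms z_pos z_less_1 by (intro power_int_decreasing) auto
    also have "\<dots> < \<theta> / K" by (fact z_\<kappa>)
    also have "\<dots> < \<theta>"
      using K_gt_1 \<theta>_pos by (simp add: divide_less_eq)
    finally show ?thesis
      using False assms by (simp add: T_def)
  qed
qed

lemma T_ge: "- \<theta> \<le> T i"
proof -
  consider "i \<le> \<kappa>" | "i = \<kappa> + 1" | "\<kappa> + 1 < i" by linarith
  then show ?thesis
  proof cases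
    case 1
    then show ?thesis using T_nonneg[of i] \<theta>_pos by simp
  next
    case 2
    have "0 \<le> q * U \<kappa> 1"
      using T_nonneg[of \<kappa>] q_pos by (simp add: T_le_\<kappa>)
    then show ?thesis using 2 z_pos by (simp add: T_def)
  next
    case 3
    then show ?thesis using z_pos by (simp add: T_def)
  qed
qed

lemma T_bellman: "T i = (z powi i - \<theta>) + p * max 0 (T (i + 1)) + q * max 0 (T (i - 1))"
proof -
  consider "i < \<kappa>" | "i = \<kappa>" | "i = \<kappa> + 1" | "\<kappa> + 1 < i" by linarith
  then show ?thesis
  proof cases
    case 1
    define j where "j = nat (\<kappa> - i - 1)"
    have "nat (\<kappa> - i) = Suc j" "nat (\<kappa> - (i + 1)) = j" "nat (\<kappa> - (i - 1)) = Suc (Suc j)"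
      using 1 by (simp_all add: j_def)
    moreover have "max 0 (T (i + 1)) = T (i + 1)" "max 0 (T (i - 1)) = T (i - 1)"
      using 1 T_nonneg[of "i + 1"] T_nonneg[of "i - 1"] by auto
    ultimately show ?thesis
      using 1 U_Suc[of i "Suc j"] by (simp add: T_le_\<kappa>)
  next
    case 2
    have "max 0 (T (i + 1)) = 0" "max 0 (T (i - 1)) = T (i - 1)"
      using 2 T_neg[of "i + 1"] T_nonneg[of "i - 1"] by auto
    moreover have "nat (\<kappa> - (i - 1)) = Suc 0" using 2 by simp
    ultimately show ?thesis
      using 2 U_Suc[of i 0] by (simp add: T_le_\<kappa>)
  next
    case 3
    have "max 0 (T (i + 1)) = 0" "max 0 (T (i - 1)) = T \<kappa>"
      using 3 T_neg[of "i + 1"] T_nonneg[of \<kappa>] by auto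
    then show ?thesis
      using 3 by (simp add: T_def)
  next
    case 4
    have "max 0 (T (i + 1)) = 0" "max 0 (T (i - 1)) = 0"
      using 4 T_neg[of "i + 1"] T_neg[of "i - 1"] by auto
    then show ?thesis
      using 4 by (simp add: T_def)
  qed
qed

end

section \<open>Equilibrium\<close>

locale disclosure_equilibrium = signal_params +
  fixes \<pi>0 :: real and \<sigma> :: "evidence \<Rightarrow> evidence pmf" and a \<mu> :: "evidence \<Rightarrow> real"
  assumes prior_pos: "0 < \<pi>0" and prior_less_1: "\<pi>0 < 1"
    and equilibrium: "equilibrium p q \<pi>0 \<sigma> a \<mu>"
begin

lemma message_suffix: "m \<in> set_pmf (\<sigma> e) \<Longrightarrow> suffix m e"
  using equilibrium by (auto simp: equilibrium_def prec_iff_suffix)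

lemma message_optimal: "m \<in> set_pmf (\<sigma> e) \<Longrightarrow> suffix m' e \<Longrightarrow> a m' \<le> a m"
  using equilibrium by (auto simp: equilibrium_def prec_iff_suffix)

lemma action_eq_\<mu>: "a = \<mu>"
  using equilibrium by (simp add: equilibrium_def)

lemma truth_leaning: "(\<And>m'. suffix m' e \<Longrightarrow> a m' \<le> a e) \<Longrightarrow> pmf (\<sigma> e) e = 1"
  using equilibrium by (simp add: equilibrium_def prec_iff_suffix)

lemma action_off_path: "(\<And>e. m \<notin> set_pmf (\<sigma> e)) \<Longrightarrow> a m = nu p q \<pi>0 m"
  using equilibrium by (simp add: equilibrium_def)

definition on_path :: "evidence \<Rightarrow> bool" where
  "on_path m \<longleftrightarrow> (\<exists>e. m \<in> set_pmf (\<sigma> e))"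

definition pool_G :: "evidence \<Rightarrow> real" where
  "pool_G m = (\<Sum>\<^sub>\<infinity>t\<in>UC m. pmf (\<sigma> t) m * FG p q t)"

definition pool_B :: "evidence \<Rightarrow> real" where
  "pool_B m = (\<Sum>\<^sub>\<infinity>t\<in>UC m. pmf (\<sigma> t) m * FB p q t)"

lemma pool_G_summable: "(\<lambda>t. pmf (\<sigma> t) m * FG p q t) summable_on A"
  by (rule summable_on_comparison_test[OF FG_summable])
     (use FG_pos in \<open>auto intro: mult_left_le_one_le less_imp_le simp: pmf_le_1\<close>)

lemma pool_B_summable: "(\<lambda>t. pmf (\<sigma> t) m * FB p q t) summable_on A"
  by (rule summable_on_comparison_test[OF FB_summable])
     (use FB_pos in \<open>auto intro: mult_left_le_one_le less_imp_le simp: pmf_le_1\<close>)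

lemma pool_pos: assumes "on_path m" shows "0 < pool_G m" "0 < pool_B m"
proof -
  obtain e where e: "m \<in> set_pmf (\<sigma> e)" using assms by (auto simp: on_path_def)
  then have "e \<in> UC m" by (simp add: UC_eq message_suffix)
  then have "pmf (\<sigma> e) m * FG p q e \<le> pool_G m" "pmf (\<sigma> e) m * FB p q e \<le> pool_B m"
    unfolding pool_G_def pool_B_def using FG_pos FB_pos
    by (auto intro!: member_le_infsum[OF pool_G_summable] member_le_infsum[OF pool_B_summable]
        intro: less_imp_le)
  moreover have "0 < pmf (\<sigma> e) m * FG p q e" "0 < pmf (\<sigma> e) m * FB p q e"
    using e FG_pos FB_pos by (simp_all add: pmf_positive)
  ultimately show "0 < pool_G m" "0 < pool_B m" by linarith+
qed

lemma action_on_path: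
  assumes "on_path m"
  shows "a m = pool_G m * \<pi>0 / (pool_G m * \<pi>0 + pool_B m * (1 - \<pi>0))"
proof -
  obtain e where e: "m \<in> set_pmf (\<sigma> e)" using assms by (auto simp: on_path_def)
  have "(\<Sum>\<^sub>\<infinity>t\<in>UC m. pmf (\<sigma> t) m * (FG p q t * \<pi>0 + FB p q t * (1 - \<pi>0)))
      = (\<Sum>\<^sub>\<infinity>t\<in>UC m. pmf (\<sigma> t) m * FG p q t * \<pi>0 + pmf (\<sigma> t) m * FB p q t * (1 - \<pi>0))"
    by (simp add: algebra_simps)
  also have "\<dots> = pool_G m * \<pi>0 + pool_B m * (1 - \<pi>0)"
    unfolding pool_G_def pool_B_def
    using infsum_lincomb[OF pool_G_summable pool_B_summable, where c = \<pi>0 and d = "1 - \<pi>0"] by (simp add: mult_ac)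
  finally show ?thesis
    using equilibrium e unfolding equilibrium_def
    by (auto simp: pool_G_def infsum_cmult_left pool_G_summable)
qed

lemma action_bounds: "0 < a m" "a m < 1"
proof -
  have "0 < a m \<and> a m < 1"
  proof (cases "on_path m")
    case True
    then show ?thesis
      using posterior_bounds[OF prior_pos prior_less_1 pool_pos[OF True]] by (simp add: action_on_path)
  next
    case False
    then show ?thesis
      using action_off_path posterior_bounds[OF prior_pos prior_less_1 FG_pos FB_pos]
      by (auto simp: on_path_def nu_def)
  qed
  then show "0 < a m" "a m < 1" by auto
qed

lemma lik_ratio_action: "on_path m \<Longrightarrow> lik_ratio \<pi>0 (a m) = pool_B m / pool_G m"
  using lik_ratio_posterior[OF prior_pos prior_less_1 pool_pos] by (simp add: action_on_path)

lemma lik_ratio_nu: "lik_ratio \<pi>0 (nu p q \<pi>0 t) = FB p q t / FG p q t"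
  using lik_ratio_posterior[OF prior_pos prior_less_1 FG_pos FB_pos] by (simp add: nu_def)

lemma nu_bounds: "0 < nu p q \<pi>0 t" "nu p q \<pi>0 t < 1"
  using posterior_bounds[OF prior_pos prior_less_1 FG_pos FB_pos] by (simp_all add: nu_def)

definition best :: "evidence \<Rightarrow> real" where
  "best t = Max (a ` {m. suffix m t})"

lemma best_ge: "suffix m t \<Longrightarrow> a m \<le> best t"
  by (simp add: best_def finite_suffixes)

lemma best_attained: "\<exists>m. suffix m t \<and> a m = best t"
proof -
  have "best t \<in> a ` {m. suffix m t}"
    unfolding best_def by (rule Max_in) (auto simp: finite_suffixes)
  then show ?thesis by auto
qed

lemma best_mono: "suffix y t \<Longrightarrow> best y \<le> best t"
  using best_attained[of y] best_ge by (metis suffix_order.trans)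

lemma best_bounds: "0 < best t" "best t < 1"
  using best_attained[of t] action_bounds by metis+

lemma action_message: "m \<in> set_pmf (\<sigma> t) \<Longrightarrow> a m = best t"
  using best_ge[OF message_suffix] best_attained[of t] message_optimal by (metis antisym)

lemma message_discloses: "m \<in> set_pmf (\<sigma> e) \<Longrightarrow> pmf (\<sigma> m) m = 1"
  by (rule truth_leaning) (meson message_suffix message_optimal suffix_order.trans)

lemma discloses_if_best_le_nu: "best t \<le> nu p q \<pi>0 t \<Longrightarrow> pmf (\<sigma> t) t = 1"
proof (cases "on_path t")
  case True
  then show "pmf (\<sigma> t) t = 1" using message_discloses by (auto simp: on_path_def)
next
  case False
  moreover assume "best t \<le> nu p q \<pi>0 t"
  ultimately show "pmf (\<sigma> t) t = 1"
    using action_off_path best_ge by (intro truth_leaning) (force simp: on_path_def)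
qed

lemma pool_balance:
  assumes "on_path m"
  shows "(\<Sum>\<^sub>\<infinity>t\<in>UC m. pmf (\<sigma> t) m * (FB p q t - lik_ratio \<pi>0 (a m) * FG p q t)) = 0"
proof -
  have "(\<Sum>\<^sub>\<infinity>t\<in>UC m. pmf (\<sigma> t) m * (FB p q t - lik_ratio \<pi>0 (a m) * FG p q t))
      = pool_B m - lik_ratio \<pi>0 (a m) * pool_G m"
    unfolding pool_G_def pool_B_def
    using infsum_lincomb[OF pool_B_summable pool_G_summable, where c = 1 and d = "- lik_ratio \<pi>0 (a m)"]
    by (simp add: algebra_simps)
  then show ?thesis
    using pool_pos[OF assms] by (simp add: lik_ratio_action[OF assms])
qed

lemma nu_less_action_in_pool:
  assumes "m \<in> set_pmf (\<sigma> t)" "nu p q \<pi>0 m < a m"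
  shows "nu p q \<pi>0 t < a m"
proof (cases "t = m")
  case False
  then have "pmf (\<sigma> t) t \<noteq> 1"
    using assms(1) set_pmf_eq_singleton by fastforce
  then have "\<not> best t \<le> nu p q \<pi>0 t"
    using discloses_if_best_le_nu by blast
  then show ?thesis
    using action_message[OF assms(1)] by simp
qed (use assms(2) in simp)

lemma action_le_nu:
  assumes "on_path m"
  shows "a m \<le> nu p q \<pi>0 m"
proof (rule ccontr)
  assume "\<not> a m \<le> nu p q \<pi>0 m"
  define w where "w t = pmf (\<sigma> t) m * (FB p q t - lik_ratio \<pi>0 (a m) * FG p q t)" for t
  have pooled: "0 < w t" if "m \<in> set_pmf (\<sigma> t)" for t
  proof -
    have "nu p q \<pi>0 t < a m"
      using nu_less_action_in_pool that \<open>\<not> a m \<le> nu p q \<pi>0 m\<close> by simp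
    then have "lik_ratio \<pi>0 (a m) < FB p q t / FG p q t"
      using lik_ratio_le_iff[OF prior_pos prior_less_1 nu_bounds(1) action_bounds(1)]
      by (simp add: lik_ratio_nu[symmetric] not_le[symmetric])
    then show ?thesis
      using that FG_pos[of t] by (simp add: w_def pmf_positive field_simps)
  qed
  have "0 \<le> w t" for t
    using pooled[of t] by (cases "m \<in> set_pmf (\<sigma> t)") (auto simp: w_def set_pmf_iff)
  moreover obtain e where e: "m \<in> set_pmf (\<sigma> e)" using assms by (auto simp: on_path_def)
  moreover have "w = (\<lambda>t. 1 * (pmf (\<sigma> t) m * FB p q t) + (- lik_ratio \<pi>0 (a m)) * (pmf (\<sigma> t) m * FG p q t))"
    by (simp add: w_def fun_eq_iff algebra_simps)
  then have "w summable_on UC m"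
    by (simp only:) (intro summable_on_lincomb pool_B_summable pool_G_summable)
  ultimately have "w e \<le> infsum w (UC m)"
    by (intro member_le_infsum) (auto simp: UC_eq message_suffix)
  then show False
    using pooled[OF e] pool_balance[OF assms] by (simp add: w_def[abs_def])
qed

lemma action_eq_min: "a m = min (nu p q \<pi>0 m) (best m)"
proof (cases "on_path m")
  case True
  then obtain e where "m \<in> set_pmf (\<sigma> e)" by (auto simp: on_path_def)
  then have "m \<in> set_pmf (\<sigma> m)"
    using message_discloses by (simp add: set_pmf_iff)
  then show ?thesis
    using action_message action_le_nu[OF True] by fastforce
next
  case False
  then show ?thesis
    using action_off_path best_ge[of m m] by (auto simp: on_path_def)
qed

definition cutoff :: "evidence \<Rightarrow> real" where
  "cutoff t = lik_ratio \<pi>0 (best t)"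

lemma cutoff_pos: "0 < cutoff t"
  using lik_ratio_pos[OF prior_pos prior_less_1 best_bounds] by (simp add: cutoff_def)

lemma cutoff_le_iff: "cutoff t \<le> cutoff y \<longleftrightarrow> best y \<le> best t"
  using lik_ratio_le_iff[OF prior_pos prior_less_1 best_bounds(1) best_bounds(1)] by (simp add: cutoff_def)

lemma cutoff_antimono: "suffix y t \<Longrightarrow> cutoff t \<le> cutoff y"
  by (simp add: cutoff_le_iff best_mono)

definition excess :: "evidence \<Rightarrow> real" where
  "excess t = FB p q t - cutoff t * FG p q t"

lemma excess_le_0_iff: "excess t \<le> 0 \<longleftrightarrow> best t \<le> nu p q \<pi>0 t"
proof -
  have "excess t \<le> 0 \<longleftrightarrow> lik_ratio \<pi>0 (nu p q \<pi>0 t) \<le> cutoff t"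
    using FG_pos[of t] by (simp add: excess_def lik_ratio_nu pos_divide_le_eq)
  also have "\<dots> \<longleftrightarrow> best t \<le> nu p q \<pi>0 t"
    using lik_ratio_le_iff[OF prior_pos prior_less_1 nu_bounds(1) best_bounds(1)]
    by (simp add: cutoff_def)
  finally show ?thesis .
qed

lemma discloses_if_excess_le_0: "excess t \<le> 0 \<Longrightarrow> pmf (\<sigma> t) t = 1"
  by (simp add: excess_le_0_iff discloses_if_best_le_nu)

lemma pool_excess: "(\<Sum>\<^sub>\<infinity>t\<in>UC m. pmf (\<sigma> t) m * excess t) = 0"
proof (cases "on_path m")
  case True
  have "pmf (\<sigma> t) m * excess t = pmf (\<sigma> t) m * (FB p q t - lik_ratio \<pi>0 (a m) * FG p q t)" for t
    by (cases "m \<in> set_pmf (\<sigma> t)") (auto simp: excess_def cutoff_def action_message set_pmf_iff)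
  then show ?thesis
    using pool_balance[OF True] by (simp only:)
next
  case False
  then have "pmf (\<sigma> t) m = 0" for t by (auto simp: on_path_def set_pmf_iff)
  then show ?thesis by simp
qed

lemma abs_excess_summable: "(\<lambda>t. \<bar>excess t\<bar>) summable_on A"
proof (rule summable_on_comparison_test)
  show "(\<lambda>t. FB p q t + cutoff [] * FG p q t) summable_on A"
    by (intro summable_on_add summable_on_cmult_right FB_summable FG_summable)
  fix t
  have "cutoff t * FG p q t \<le> cutoff [] * FG p q t"
    using cutoff_antimono[of "[]" t] FG_pos[of t] by (simp add: mult_right_mono)
  moreover have "0 < cutoff t * FG p q t"
    using cutoff_pos FG_pos by simp
  ultimately show "\<bar>excess t\<bar> \<le> FB p q t + cutoff [] * FG p q t"
    unfolding excess_def abs_le_iff using FB_pos[of t] by (intro conjI) linarith+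
qed simp

lemma excess_summable: "excess summable_on A"
  using abs_excess_summable by (rule summable_on_abs_bound) simp

definition excess_sum :: "evidence \<Rightarrow> real" where
  "excess_sum t = infsum excess (UC t)"

lemma excess_sum_rec: "excess_sum t = excess t + excess_sum (sg # t) + excess_sum (sb # t)"
proof -
  have "excess_sum t = excess t + infsum excess (UC (sg # t) \<union> UC (sb # t))"
    unfolding excess_sum_def
    by (subst UC_Cons_split(1), rule infsum_insert) (use excess_summable UC_Cons_split(2) in auto)
  also have "infsum excess (UC (sg # t) \<union> UC (sb # t)) = excess_sum (sg # t) + excess_sum (sb # t)"
    unfolding excess_sum_def by (rule infsum_Un_disjoint) (use excess_summable UC_Cons_split(3) in auto)
  finally show ?thesis by simp
qed

lemma excess_sum_le: "excess_sum t \<le> S * FB p q t"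
proof -
  have "excess_sum t \<le> infsum (FB p q) (UC t)"
    unfolding excess_sum_def using cutoff_pos FG_pos
    by (intro infsum_mono excess_summable FB_summable) (simp add: excess_def less_imp_le)
  then show ?thesis using infsum_FB_UC_le[of t] by linarith
qed

definition between :: "evidence \<Rightarrow> evidence \<Rightarrow> evidence set" where
  "between e t = {m. suffix m t \<and> suffix e m}"

definition escape :: "evidence \<Rightarrow> evidence \<Rightarrow> real" where
  "escape e t = 1 - (\<Sum>m\<in>between e t. pmf (\<sigma> t) m)"

lemma finite_between: "finite (between e t)"
  by (rule finite_subset[OF _ finite_suffixes[of t]]) (auto simp: between_def)

lemma sum_between_le_1: "(\<Sum>m\<in>between e t. pmf (\<sigma> t) m) \<le> 1"
proof -
  have "(\<Sum>m\<in>between e t. pmf (\<sigma> t) m) \<le> (\<Sum>m\<in>{m. suffix m t}. pmf (\<sigma> t) m)"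
    by (intro sum_mono2 finite_suffixes) (auto simp: between_def)
  also have "\<dots> = 1"
    by (rule sum_pmf_eq_1) (auto simp: finite_suffixes message_suffix)
  finally show ?thesis .
qed

lemma escape_bounds: "0 \<le> escape e t" "escape e t \<le> 1"
  using sum_between_le_1 by (simp_all add: escape_def sum_nonneg)

lemma pmf_le_escape:
  assumes "suffix m t" "\<not> suffix e m"
  shows "pmf (\<sigma> t) m \<le> escape e t"
proof -
  have "(\<Sum>x\<in>{m. suffix m t}. pmf (\<sigma> t) x)
      = (\<Sum>x\<in>between e t. pmf (\<sigma> t) x) + (\<Sum>x\<in>{m. suffix m t} - between e t. pmf (\<sigma> t) x)"
    by (intro sum.subset_diff[unfolded add.commute[of "sum _ (_ - _)"]] finite_suffixes)
       (auto simp: between_def)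
  moreover have "(\<Sum>x\<in>{m. suffix m t}. pmf (\<sigma> t) x) = 1"
    by (rule sum_pmf_eq_1) (auto simp: finite_suffixes message_suffix)
  moreover have "pmf (\<sigma> t) m \<le> (\<Sum>x\<in>{m. suffix m t} - between e t. pmf (\<sigma> t) x)"
    using assms by (intro member_le_sum) (auto simp: between_def finite_suffixes)
  ultimately show ?thesis by (simp add: escape_def)
qed

lemma excess_escape_nonneg:
  assumes "suffix e t"
  shows "0 \<le> excess t * escape e t"
proof (cases "excess t \<le> 0")
  case True
  then have "pmf (\<sigma> t) t = 1" by (rule discloses_if_excess_le_0)
  moreover have "pmf (\<sigma> t) t \<le> (\<Sum>m\<in>between e t. pmf (\<sigma> t) m)"
    using assms by (intro member_le_sum finite_between) (auto simp: between_def)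
  ultimately have "escape e t = 0"
    using sum_between_le_1[where e = e and t = t] by (simp add: escape_def)
  then show ?thesis by simp
qed (simp add: escape_bounds)

lemma abs_sum_between_le: "\<bar>\<Sum>m\<in>between e t. pmf (\<sigma> t) m * excess t\<bar> \<le> \<bar>excess t\<bar>"
proof -
  have "\<bar>\<Sum>m\<in>between e t. pmf (\<sigma> t) m * excess t\<bar> = (\<Sum>m\<in>between e t. pmf (\<sigma> t) m) * \<bar>excess t\<bar>"
    by (simp add: abs_mult sum_nonneg flip: sum_distrib_right)
  also have "\<dots> \<le> \<bar>excess t\<bar>"
    using sum_between_le_1 by (intro mult_left_le_one_le) (auto simp: sum_nonneg)
  finally show ?thesis .
qed

text \<open>Exchanging the order of summation turns this sum into a sum of the Bayes-consistent pools
  of the messages extending \<open>e\<close>, each of which vanishes by \<open>pool_excess\<close>.\<close>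

lemma pools_between_excess: "(\<Sum>\<^sub>\<infinity>t\<in>UC e. \<Sum>m\<in>between e t. pmf (\<sigma> t) m * excess t) = 0"
proof -
  define f where "f = (\<lambda>(t, m). pmf (\<sigma> t) m * excess t)"
  have "(\<lambda>x. norm (f x)) summable_on Sigma (UC e) (between e)"
  proof (rule summable_on_SigmaI)
    show "((\<lambda>m. norm (f (t, m))) has_sum (\<Sum>m\<in>between e t. norm (f (t, m)))) (between e t)" for t
      using finite_between by (intro has_sum_finiteI) auto
    have "(\<Sum>m\<in>between e t. norm (f (t, m))) = \<bar>\<Sum>m\<in>between e t. pmf (\<sigma> t) m * excess t\<bar>" for t
      by (simp add: f_def abs_mult sum_nonneg flip: sum_distrib_right)
    then show "(\<lambda>t. \<Sum>m\<in>between e t. norm (f (t, m))) summable_on UC e"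
      using abs_sum_between_le abs_excess_summable
      by (intro summable_on_comparison_test[OF abs_excess_summable]) auto
  qed auto
  then have summable: "f summable_on Sigma (UC e) (between e)"
    by (rule abs_summable_summable)
  have swap: "bij_betw prod.swap (Sigma (UC e) (between e)) (Sigma (UC e) UC)"
    by (rule bij_betwI[where g = prod.swap])
       (auto simp: UC_eq between_def intro: suffix_order.trans)
  then have summable': "(\<lambda>(m, t). f (t, m)) summable_on Sigma (UC e) UC"
    using summable summable_on_reindex_bij_betw[OF swap, of "\<lambda>(m, t). f (t, m)"]
    by (simp add: case_prod_beta)
  have "(\<Sum>\<^sub>\<infinity>t\<in>UC e. \<Sum>m\<in>between e t. pmf (\<sigma> t) m * excess t) = infsum f (Sigma (UC e) (between e))"
    using infsum_Sigma'_banach[of "\<lambda>t m. pmf (\<sigma> t) m * excess t" "UC e" "between e"] summable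
    by (simp add: f_def finite_between)
  also have "\<dots> = infsum (\<lambda>(m, t). f (t, m)) (Sigma (UC e) UC)"
    using infsum_reindex_bij_betw[OF swap, of "\<lambda>(m, t). f (t, m)"] by (simp add: case_prod_beta)
  also have "\<dots> = (\<Sum>\<^sub>\<infinity>m\<in>UC e. \<Sum>\<^sub>\<infinity>t\<in>UC m. pmf (\<sigma> t) m * excess t)"
    using infsum_Sigma'_banach[of "\<lambda>m t. pmf (\<sigma> t) m * excess t" "UC e" UC] summable'
    by (simp add: f_def)
  also have "\<dots> = 0"
    by (simp add: pool_excess)
  finally show ?thesis .
qed

lemma excess_escape_summable: "(\<lambda>t. excess t * escape e t) summable_on A"
  by (rule summable_on_abs_bound[OF abs_excess_summable])
     (use escape_bounds in \<open>auto simp: abs_mult intro: mult_left_le\<close>)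

lemma excess_sum_eq_escape: "excess_sum e = (\<Sum>\<^sub>\<infinity>t\<in>UC e. excess t * escape e t)"
proof -
  have split: "excess t = (\<Sum>m\<in>between e t. pmf (\<sigma> t) m * excess t) + excess t * escape e t" for t
    by (simp add: escape_def right_diff_distrib flip: sum_distrib_right)
  have "excess_sum e = (\<Sum>\<^sub>\<infinity>t\<in>UC e. (\<Sum>m\<in>between e t. pmf (\<sigma> t) m * excess t) + excess t * escape e t)"
    unfolding excess_sum_def by (rule infsum_cong) (rule split)
  also have "\<dots> = (\<Sum>\<^sub>\<infinity>t\<in>UC e. \<Sum>m\<in>between e t. pmf (\<sigma> t) m * excess t) + (\<Sum>\<^sub>\<infinity>t\<in>UC e. excess t * escape e t)"
    by (intro infsum_add excess_escape_summable summable_on_abs_bound[OF abs_excess_summable]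
        abs_sum_between_le)
  finally show ?thesis
    by (simp add: pools_between_excess)
qed

lemma excess_sum_nonneg: "0 \<le> excess_sum e"
  unfolding excess_sum_eq_escape by (rule infsum_nonneg) (simp add: UC_eq excess_escape_nonneg)

lemma excess_escape_le_excess_sum:
  assumes "suffix e t"
  shows "excess t * escape e t \<le> excess_sum e"
  unfolding excess_sum_eq_escape using assms
  by (intro member_le_infsum excess_escape_summable) (auto simp: UC_eq excess_escape_nonneg)

definition new_best :: "evidence \<Rightarrow> bool" where
  "new_best e \<longleftrightarrow> e = [] \<or> best (tl e) < best e"

lemma excess_sum_new_best:
  assumes "new_best e"
  shows "excess_sum e = 0"
proof -
  have "escape e t = 0" if t: "suffix e t" for t
  proof -
    have "set_pmf (\<sigma> t) \<subseteq> between e t"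
    proof
      fix m assume m: "m \<in> set_pmf (\<sigma> t)"
      have "suffix e m"
      proof (rule ccontr)
        assume "\<not> suffix e m"
        then have "suffix m e" "m \<noteq> e"
          using suffix_same_cases[OF message_suffix[OF m] t] by auto
        then have "e \<noteq> []" "suffix m (tl e)"
          by (cases e; auto simp: suffix_Cons)+
        then have "best e \<le> best (tl e)"
          using action_message[OF m] best_ge[of m "tl e"] best_mono[OF t] by linarith
        then show False using assms \<open>e \<noteq> []\<close> by (simp add: new_best_def)
      qed
      then show "m \<in> between e t" using message_suffix[OF m] by (simp add: between_def)
    qed
    then show ?thesis by (simp add: escape_def sum_pmf_eq_1 finite_between)
  qed
  then have "(\<Sum>\<^sub>\<infinity>t\<in>UC e. excess t * escape e t) = (\<Sum>\<^sub>\<infinity>t\<in>UC e. 0)"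
    by (intro infsum_cong) (simp add: UC_eq)
  then show ?thesis
    by (simp add: excess_sum_eq_escape)
qed

lemma excess_sum_Cons_eq_0:
  assumes "cutoff (s # u) \<noteq> cutoff u"
  shows "excess_sum (s # u) = 0"
proof (rule excess_sum_new_best)
  have "best (s # u) \<noteq> best u" using assms by (auto simp: cutoff_def)
  moreover have "best u \<le> best (s # u)" by (rule best_mono) (simp add: suffix_Cons)
  ultimately show "new_best (s # u)" by (simp add: new_best_def)
qed

text \<open>On a plateau of the cutoff, \<open>excess_sum\<close> is bounded by any supersolution of the Bellman
  equation of \<open>stopping_problem\<close>: children that leave the plateau have a new best action and
  therefore \<open>excess_sum = 0\<close>, which corresponds to stopping.\<close>

definition plateau_gap :: "real \<Rightarrow> (int \<Rightarrow> real) \<Rightarrow> evidence \<Rightarrow> real" where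
  "plateau_gap \<theta> T u = (if cutoff u = \<theta> then excess_sum u - FG p q u * T (Dd u) else 0)"

lemma plateau_gap_subharmonic:
  fixes T :: "int \<Rightarrow> real"
  assumes bellman: "\<And>i. (z powi i - \<theta>) + p * max 0 (T (i + 1)) + q * max 0 (T (i - 1)) \<le> T i"
    and below: "cutoff u \<le> \<theta>"
  shows "plateau_gap \<theta> T u \<le> plateau_gap \<theta> T (sg # u) + plateau_gap \<theta> T (sb # u)"
proof (cases "cutoff u = \<theta>")
  case False
  then have "cutoff (s # u) \<noteq> \<theta>" for s
    using below cutoff_antimono[of u "s # u"] by (auto simp: suffix_Cons)
  then show ?thesis using False by (simp add: plateau_gap_def)
next
  case True
  have child: "excess_sum (s # u) = plateau_gap \<theta> T (s # u)
      + (if cutoff (s # u) = \<theta> then FG p q (s # u) * T (Dd (s # u)) else 0)" for s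
    using excess_sum_Cons_eq_0[of s u] True by (auto simp: plateau_gap_def)
  have "plateau_gap \<theta> T u = excess_sum u - FG p q u * T (Dd u)"
    using True by (simp add: plateau_gap_def)
  moreover have "excess u = FG p q u * (z powi Dd u - \<theta>)"
    using True by (simp add: excess_def FB_eq_FG_z_powi algebra_simps)
  moreover have "(if cutoff (sg # u) = \<theta> then FG p q (sg # u) * T (Dd (sg # u)) else 0)
      \<le> p * FG p q u * max 0 (T (Dd u + 1))"
    using if_le_max[OF mult_nonneg_nonneg[OF less_imp_le[OF p_pos] FG_nonneg[of u]],
        where P = "cutoff (sg # u) = \<theta>" and x = "T (Dd u + 1)"]
    by (simp only: FG_Cons Dd_simps)
  moreover have "(if cutoff (sb # u) = \<theta> then FG p q (sb # u) * T (Dd (sb # u)) else 0)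
      \<le> q * FG p q u * max 0 (T (Dd u - 1))"
    using if_le_max[OF mult_nonneg_nonneg[OF less_imp_le[OF q_pos] FG_nonneg[of u]],
        where P = "cutoff (sb # u) = \<theta>" and x = "T (Dd u - 1)"]
    by (simp only: FG_Cons Dd_simps)
  moreover have "FG p q u * (z powi Dd u - \<theta>) + p * FG p q u * max 0 (T (Dd u + 1))
      + q * FG p q u * max 0 (T (Dd u - 1)) \<le> FG p q u * T (Dd u)"
    using mult_left_mono[OF bellman[of "Dd u"] FG_nonneg[of u]] by (simp add: algebra_simps)
  ultimately show ?thesis
    using excess_sum_rec[of u] child[of sg] child[of sb] by linarith
qed

lemma plateau_gap_le:
  assumes "\<And>i. - \<theta> \<le> T i" "0 \<le> \<theta>"
  shows "plateau_gap \<theta> T u \<le> S * FB p q u + \<theta> * FG p q u"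
proof (cases "cutoff u = \<theta>")
  case True
  have "- (FG p q u * T (Dd u)) \<le> \<theta> * FG p q u"
    using mult_left_mono[OF assms(1)[of "Dd u"] FG_nonneg[of u]] by (simp add: algebra_simps)
  then show ?thesis
    using True excess_sum_le[of u] by (simp add: plateau_gap_def)
next
  case False
  then show ?thesis
    using assms(2) S_pos by (simp add: plateau_gap_def)
qed

lemma excess_sum_le_supersolution:
  fixes T :: "int \<Rightarrow> real"
  assumes bellman: "\<And>i. (z powi i - \<theta>) + p * max 0 (T (i + 1)) + q * max 0 (T (i - 1)) \<le> T i"
    and T_ge: "\<And>i. - \<theta> \<le> T i"
    and plateau: "cutoff e = \<theta>"
  shows "excess_sum e \<le> FG p q e * T (Dd e)"
proof -
  have "plateau_gap \<theta> T e \<le> 0"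
  proof (rule subharmonic_nonpos[where c = S and d = \<theta>])
    fix u assume "suffix e u"
    then have "cutoff u \<le> \<theta>" using cutoff_antimono plateau by blast
    then show "plateau_gap \<theta> T u \<le> plateau_gap \<theta> T (sg # u) + plateau_gap \<theta> T (sb # u)"
      by (rule plateau_gap_subharmonic[OF bellman])
    show "plateau_gap \<theta> T u \<le> S * FB p q u + \<theta> * FG p q u"
      using T_ge cutoff_pos[of e] plateau by (intro plateau_gap_le) auto
  qed
  then show ?thesis
    using plateau by (simp add: plateau_gap_def)
qed

lemma cutoff_le_K_z_powi_Dd: "cutoff e \<le> K * z powi Dd e"
proof (rule ccontr)
  assume "\<not> cutoff e \<le> K * z powi Dd e"
  then have gt: "K * z powi Dd e < cutoff e" by simp
  obtain \<kappa> where \<kappa>: "cutoff e \<le> K * z powi \<kappa>" "K * z powi (\<kappa> + 1) < cutoff e"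
    using level_exists[OF cutoff_pos] by blast
  interpret stopping_problem p q "cutoff e" \<kappa>
    using \<kappa> cutoff_pos q_pos q_less_p p_plus_q_less_1 by unfold_locales auto
  have "\<kappa> < Dd e"
  proof (rule ccontr)
    assume "\<not> \<kappa> < Dd e"
    then have "z powi \<kappa> \<le> z powi Dd e"
      using z_pos z_less_1 by (intro power_int_decreasing) auto
    then show False
      using mult_left_mono[of "z powi \<kappa>" "z powi Dd e" K] K_pos gt \<kappa>(1) by linarith
  qed
  then have "FG p q e * T (Dd e) < 0"
    using T_neg FG_pos by (simp add: mult_pos_neg)
  moreover have "excess_sum e \<le> FG p q e * T (Dd e)"
  proof (rule excess_sum_le_supersolution)
    show "(z powi i - cutoff e) + p * max 0 (T (i + 1)) + q * max 0 (T (i - 1)) \<le> T i" for i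
      using T_bellman[of i] by linarith
  qed (simp_all add: T_ge)
  ultimately show False
    using excess_sum_nonneg[of e] by linarith
qed

lemma cutoff_le_K_z_powi_Nmax: "cutoff t \<le> K * z powi Nmax t"
proof -
  obtain y where "suffix y t" "Dd y = Nmax t" using Nmax_attained by blast
  then show ?thesis
    using cutoff_antimono cutoff_le_K_z_powi_Dd[of y] by fastforce
qed

lemma peak_gap_le_excess_sum: "S * FB p q t - peak_sum t \<le> excess_sum t"
proof -
  define h where "h u = S * FB p q u - peak_sum u - excess_sum u" for u
  have "h t \<le> 0"
  proof (rule subharmonic_nonpos[where c = S and d = 0])
    fix u
    have "FB p q u - FG p q u * (K * z powi Nmax u) \<le> excess u"
      using mult_right_mono[OF cutoff_le_K_z_powi_Nmax FG_nonneg, of u]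
      by (simp add: excess_def mult.commute)
    then show "h u \<le> h (sg # u) + h (sb # u)"
      using S_FB_rec[of u] peak_sum_rec[of u] excess_sum_rec[of u] by (simp add: h_def)
    show "h u \<le> S * FB p q u + 0 * FG p q u"
      using peak_sum_nonneg[of u] excess_sum_nonneg[of u] by (simp add: h_def)
  qed
  then show ?thesis by (simp add: h_def)
qed

lemma K_z_powi_le_cutoff_new_best:
  assumes "new_best y"
  shows "K * z powi Nmax y \<le> cutoff y"
proof -
  have "0 \<le> S * FB p q y - peak_sum y"
    using peak_sum_le[of y] by simp
  also have "\<dots> = FB p q y - FG p q y * (K * z powi Nmax y)
      + (S * FB p q (sg # y) - peak_sum (sg # y)) + (S * FB p q (sb # y) - peak_sum (sb # y))"
    using S_FB_rec[of y] peak_sum_rec[of y] by simp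
  also have "\<dots> \<le> FB p q y - FG p q y * (K * z powi Nmax y) + excess_sum (sg # y) + excess_sum (sb # y)"
    using peak_gap_le_excess_sum[of "sg # y"] peak_gap_le_excess_sum[of "sb # y"] by simp
  also have "\<dots> = FG p q y * (cutoff y - K * z powi Nmax y)"
    using excess_sum_rec[of y] excess_sum_new_best[OF assms] by (simp add: excess_def algebra_simps)
  finally show ?thesis
    using FG_pos[of y] by (simp add: zero_le_mult_iff)
qed

lemma K_z_powi_le_cutoff: "K * z powi Nmax t \<le> cutoff t"
proof (induction t)
  case Nil
  then show ?case by (simp add: K_z_powi_le_cutoff_new_best new_best_def)
next
  case (Cons s t)
  show ?case
  proof (cases "new_best (s # t)")
    case True
    then show ?thesis by (rule K_z_powi_le_cutoff_new_best)
  next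
    case False
    then have "cutoff (s # t) = cutoff t"
      using best_mono[of t "s # t"] by (simp add: new_best_def cutoff_def suffix_Cons)
    moreover have "z powi Nmax (s # t) \<le> z powi Nmax t"
      using Nmax_mono[of t "s # t"] z_pos z_less_1 by (intro power_int_decreasing) (auto simp: suffix_Cons)
    ultimately show ?thesis
      using Cons.IH mult_left_mono[of "z powi Nmax (s # t)" "z powi Nmax t" K] K_pos by linarith
  qed
qed

theorem cutoff_eq: "cutoff t = K * z powi Nmax t"
  using cutoff_le_K_z_powi_Nmax K_z_powi_le_cutoff by (rule antisym)

lemma excess_sum_peak:
  assumes "Dd y = Nmax y"
  shows "excess_sum y = 0"
proof -
  define h where "h u = excess_sum u - (S * FB p q u - peak_sum u)" for u
  have "h y \<le> 0"
  proof (rule subharmonic_nonpos[where c = S and d = 0])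
    fix u
    show "h u \<le> h (sg # u) + h (sb # u)"
      using S_FB_rec[of u] peak_sum_rec[of u] excess_sum_rec[of u]
      by (simp add: h_def excess_def cutoff_eq algebra_simps)
    show "h u \<le> S * FB p q u + 0 * FG p q u"
      using excess_sum_le[of u] peak_sum_le[of u] by (simp add: h_def)
  qed
  then show ?thesis
    using assms excess_sum_nonneg[of y] by (simp add: h_def peak_sum_peak)
qed

lemma Vval_eq_posterior:
  "Vval p q \<pi>0 t = 1 * \<pi>0 / (1 * \<pi>0 + K * z powi Nmax t * (1 - \<pi>0))"
proof -
  have "(q / p) powi (Nmax t + 1) = z powi Nmax t * z"
    by (simp add: z_powi_Suc flip: z_def)
  then have "(1 - \<pi>0) / \<pi>0 * ((p - alpha p q) / (q - alpha p q)) * (q / p) powi (Nmax t + 1)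
      = (1 - \<pi>0) / \<pi>0 * (K * z powi Nmax t)"
    by (simp add: K_def mult_ac)
  then have "Vval p q \<pi>0 t = 1 / (1 + (1 - \<pi>0) / \<pi>0 * (K * z powi Nmax t))"
    by (simp only: Vval_def)
  also have "1 + (1 - \<pi>0) / \<pi>0 * (K * z powi Nmax t) = (\<pi>0 + K * z powi Nmax t * (1 - \<pi>0)) / \<pi>0"
    using prior_pos by (simp add: field_simps)
  finally show ?thesis by simp
qed

lemma best_eq_Vval: "best t = Vval p q \<pi>0 t"
proof (rule lik_ratio_inj[OF prior_pos prior_less_1 best_bounds(1)])
  have pos: "0 < K * z powi Nmax t" using K_pos z_pos by simp
  then show "0 < Vval p q \<pi>0 t"
    using posterior_bounds(1)[OF prior_pos prior_less_1 zero_less_one pos] by (simp add: Vval_eq_posterior)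
  show "lik_ratio \<pi>0 (best t) = lik_ratio \<pi>0 (Vval p q \<pi>0 t)"
    using lik_ratio_posterior[OF prior_pos prior_less_1 zero_less_one pos]
    by (simp add: Vval_eq_posterior flip: cutoff_def cutoff_eq)
qed

lemma action_eq_min_Vval_nu: "a e = \<mu> e \<and> \<mu> e = min (Vval p q \<pi>0 e) (nu p q \<pi>0 e)"
  using action_eq_\<mu> action_eq_min[of e] best_eq_Vval[of e] by (simp add: min.commute)

lemma discloses_iff:
  "pmf (\<sigma> e) e = 1 \<longleftrightarrow> real_of_int (Dd e) \<ge> real_of_int (Nmax e) - nstar p q"
proof -
  have "pmf (\<sigma> e) e = 1 \<longleftrightarrow> excess e \<le> 0"
  proof
    assume "pmf (\<sigma> e) e = 1"
    then have "a e = best e"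
      by (intro action_message) (simp add: set_pmf_iff)
    then show "excess e \<le> 0"
      using action_eq_min[of e] by (simp add: excess_le_0_iff)
  qed (rule discloses_if_excess_le_0)
  also have "\<dots> \<longleftrightarrow> z powi Dd e \<le> K * z powi Nmax e"
    using FG_pos[of e] by (simp add: excess_def cutoff_eq FB_eq_FG_z_powi mult.commute)
  also have "\<dots> \<longleftrightarrow> real_of_int (Dd e) \<ge> real_of_int (Nmax e) - nstar p q"
    by (rule powi_le_K_powi_iff)
  finally show ?thesis .
qed

lemma message_length_ge:
  assumes "pmf (\<sigma> e) m > 0"
  shows "length m \<ge> Max {k. k \<le> length e \<and> Dd (restr e k) = Nmax e}"
proof (rule ccontr)
  obtain y where y: "suffix y e" "Dd y = Nmax e"
    and len_y: "length y = Max {k. k \<le> length e \<and> Dd (restr e k) = Nmax e}"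
    by (rule longest_peak_suffix)
  assume "\<not> ?thesis"
  then have shorter: "length m < length y" by (simp add: len_y)
  have m: "m \<in> set_pmf (\<sigma> e)" using assms by (simp add: set_pmf_iff)
  have "Dd y = Nmax y"
    using y Nmax_mono[OF y(1)] Dd_le_Nmax[of y] by simp
  then have "excess_sum y = 0" by (rule excess_sum_peak)
  have "m \<noteq> e" using shorter suffix_length_le[OF y(1)] by auto
  then have "pmf (\<sigma> e) e \<noteq> 1" using m set_pmf_eq_singleton by fastforce
  then have "\<not> excess e \<le> 0" using discloses_if_excess_le_0 by blast
  then have "0 < excess e" by simp
  moreover have "pmf (\<sigma> e) m \<le> escape y e"
    using message_suffix[OF m] shorter by (intro pmf_le_escape) (auto dest: suffix_length_le)
  ultimately have "excess e * pmf (\<sigma> e) m \<le> excess e * escape y e"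
    by (simp add: mult_left_mono)
  also have "\<dots> \<le> excess_sum y" by (rule excess_escape_le_excess_sum[OF y(1)])
  finally show False
    using \<open>excess_sum y = 0\<close> \<open>0 < excess e\<close> assms by (simp add: mult_le_0_iff)
qed

end

theorem proposition6:
  fixes p q \<pi>0 :: real
  assumes "0 < q" and "q < p" and "p < 1" and "p + q < 1"
    and "0 < \<pi>0" and "\<pi>0 < 1"
  shows "nstar p q > 0 \<and>
    (\<forall>\<sigma> a \<mu>. equilibrium p q \<pi>0 \<sigma> a \<mu> \<longrightarrow>
      (\<forall>e.
        (a e = \<mu> e \<and> \<mu> e = min (Vval p q \<pi>0 e) (nu p q \<pi>0 e)) \<and>
        (pmf (\<sigma> e) e = 1 \<longleftrightarrow> real_of_int (Dd e) \<ge> real_of_int (Nmax e) - nstar p q) \<and>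
        (\<forall>m. pmf (\<sigma> e) m > 0 \<longrightarrow>
           length m \<ge> Max {k. k \<le> length e \<and> Dd (restr e k) = Nmax e})))"
proof -
  interpret signal_params p q
    using assms by unfold_locales auto
  have "\<forall>e. (a e = \<mu> e \<and> \<mu> e = min (Vval p q \<pi>0 e) (nu p q \<pi>0 e)) \<and>
        (pmf (\<sigma> e) e = 1 \<longleftrightarrow> real_of_int (Dd e) \<ge> real_of_int (Nmax e) - nstar p q) \<and>
        (\<forall>m. pmf (\<sigma> e) m > 0 \<longrightarrow>
           length m \<ge> Max {k. k \<le> length e \<and> Dd (restr e k) = Nmax e})"
    if "equilibrium p q \<pi>0 \<sigma> a \<mu>" for \<sigma> a \<mu>
  proof -
    interpret disclosure_equilibrium p q \<pi>0 \<sigma> a \<mu>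
      using assms that by unfold_locales auto
    show ?thesis
      using action_eq_min_Vval_nu discloses_iff message_length_ge by blast
  qed
  then show ?thesis
    using nstar_pos by blast
qed

end
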